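(* Let $X$ be a real Hilbert space, let $\mu\ge\omega\ge0$ and $\beta>0$. Let $f\colon X\to\mathbb{R}$ be $\mu$-strongly convex and Fréchet differentiable with $\beta$-Lipschitz continuous gradient, and let $g\colon X\to\left]-\infty,+\infty\right]$ be proper, lower semicontinuous and $\omega$-hypoconvex. Suppose $\operatorname{argmin}(f+g)\neq\varnothing$. Let $\gamma\in\left]0,\frac2{\beta+2\mu}\right[$, set $\delta=\frac{1-\gamma\mu}{1-\gamma\omega}$ and $T=\operatorname{prox}_{\gamma g}(\mathrm{Id}-\gamma\nabla f)$, and let $x_0\in X$. Then $\operatorname{Fix}T=\operatorname{argmin}(f+g)$ and there exists $\bar x\in\operatorname{argmin}(f+g)$ with $T^nx_0\rightharpoonup\bar x$. If moreover $\mu>\omega$, then $\operatorname{argmin}(f+g)=\{\bar x\}$ and $T^nx_0\to\bar x$ with linear rate $\delta<1$.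
   Context: $g$ is $\omega$-hypoconvex if $g+\tfrac\omega2\|\cdot\|^2$ is convex. For $\gamma>0$ with $\gamma\omega<1$, $\operatorname{prox}_{\gamma g}(x)=\operatorname{argmin}_{y\in X}\big(g(y)+\tfrac1{2\gamma}\|x-y\|^2\big)$, which is single-valued with full domain. $f$ is $\mu$-strongly convex if $f-\tfrac\mu2\|\cdot\|^2$ is convex. *)

theory Defs
  imports "HOL-Analysis.Analysis"
begin

(* Extended-real-valued functions g : X -> ]-inf,+inf] are modelled as 'a => ereal
   with g x \<noteq> -\<infinity> for all x. *)

definition proper_fun :: "('a \<Rightarrow> ereal) \<Rightarrow> bool" where
  "proper_fun g \<longleftrightarrow> (\<forall>x. g x \<noteq> -\<infinity>) \<and> (\<exists>x. g x \<noteq> \<infinity>)"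

definition lsc_fun :: "('a::topological_space \<Rightarrow> ereal) \<Rightarrow> bool" where
  "lsc_fun g \<longleftrightarrow> (\<forall>c. closed {x. g x \<le> c})"

definition ereal_convex :: "('a::real_vector \<Rightarrow> ereal) \<Rightarrow> bool" where
  "ereal_convex h \<longleftrightarrow> (\<forall>x y t. 0 \<le> t \<and> t \<le> 1 \<longrightarrow>
      h (t *\<^sub>R x + (1 - t) *\<^sub>R y) \<le> ereal t * h x + ereal (1 - t) * h y)"

definition hypoconvex :: "real \<Rightarrow> ('a::real_normed_vector \<Rightarrow> ereal) \<Rightarrow> bool" where
  "hypoconvex \<omega> g \<longleftrightarrow> ereal_convex (\<lambda>x. g x + ereal (\<omega> / 2 * (norm x)\<^sup>2))"

definition strongly_convex :: "real \<Rightarrow> ('a::real_normed_vector \<Rightarrow> real) \<Rightarrow> bool" where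
  "strongly_convex \<mu> f \<longleftrightarrow> convex_on UNIV (\<lambda>x. f x - \<mu> / 2 * (norm x)\<^sup>2)"

(* prox_{\<gamma> g}(x) = argmin_y ( g y + 1/(2\<gamma>) \<parallel>x - y\<parallel>^2 ), single-valued when \<gamma>\<omega> < 1 *)
definition prox :: "real \<Rightarrow> ('a::real_normed_vector \<Rightarrow> ereal) \<Rightarrow> 'a \<Rightarrow> 'a" where
  "prox \<gamma> g x = (THE p. \<forall>y. g p + ereal ((norm (x - p))\<^sup>2 / (2 * \<gamma>))
                              \<le> g y + ereal ((norm (x - y))\<^sup>2 / (2 * \<gamma>)))"

definition argmin_sum :: "('a \<Rightarrow> real) \<Rightarrow> ('a \<Rightarrow> ereal) \<Rightarrow> 'a set" where
  "argmin_sum f g = {x. \<forall>y. ereal (f x) + g x \<le> ereal (f y) + g y}"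

definition fixpoints :: "('a \<Rightarrow> 'a) \<Rightarrow> 'a set" where
  "fixpoints T = {x. T x = x}"

definition weakly_converges :: "(nat \<Rightarrow> 'a::real_inner) \<Rightarrow> 'a \<Rightarrow> bool" where
  "weakly_converges xs x \<longleftrightarrow> (\<forall>y. (\<lambda>n. inner (xs n) y) \<longlonglongrightarrow> inner x y)"

end

(*
  Completing the square shows that the prox of the \<omega>-hypoconvex g with step \<gamma> is the prox of the
  convex lsc function g + \<omega>/2 \<parallel>.\<parallel>\<^sup>2 with step \<gamma>/(1 - \<gamma>\<omega>) at a rescaled point. Hence T = P \<circ> v with
  P firmly nonexpansive and v x = \<delta> (x - s (\<nabla>f x - \<mu> x)), s = \<gamma>/(1 - \<gamma>\<mu>). By Baillon-Haddad,
  \<nabla>f - \<mu> Id is 1/\<beta>-cocoercive, and s < 2/\<beta> makes the forward step nonexpansive, so T is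
  \<delta>-Lipschitz. Fixed points of T and minimisers of f + g satisfy the same variational inequality.
  If \<mu> > \<omega>, then \<delta> < 1 and Banach's argument gives linear convergence to the unique minimiser.
  If \<mu> = \<omega>, then T is averaged: the iterates are Fejer monotone with respect to Fix T and
  asymptotically regular, I - T is demiclosed, and Opial's argument together with weak sequential
  compactness of bounded sets yields weak convergence.
*)

theory Submission
  imports Defs "HOL-Library.Diagonal_Subsequence"
begin

section \<open>Smooth convex functions\<close>

lemma has_real_derivative_along_line:
  fixes f :: "'a::real_inner \<Rightarrow> real"
  assumes "\<And>x. (f has_derivative (\<lambda>h. inner (G x) h)) (at x)"
  shows "((\<lambda>t. f (x + t *\<^sub>R d)) has_real_derivative inner (G (x + t *\<^sub>R d)) d) (at t)"
proof -
  have "((\<lambda>t. x + t *\<^sub>R d) has_derivative (\<lambda>h. h *\<^sub>R d)) (at t)"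
    by (auto intro!: derivative_eq_intros)
  from has_derivative_compose[OF this assms]
  show ?thesis
    by (rule has_derivative_imp_has_field_derivative) simp
qed

lemma descent_lemma:
  fixes f :: "'a::real_inner \<Rightarrow> real"
  assumes D: "\<And>x. (f has_derivative (\<lambda>h. inner (G x) h)) (at x)"
    and L: "\<beta>-lipschitz_on UNIV G"
  shows "f y \<le> f x + inner (G x) (y - x) + \<beta>/2 * (norm (y - x))\<^sup>2"
proof -
  define d where "d = y - x"
  define \<phi> where "\<phi> t = f (x + t *\<^sub>R d) - t * inner (G x) d - \<beta>/2 * t^2 * (norm d)\<^sup>2" for t
  have "\<phi> 1 \<le> \<phi> 0"
  proof (rule DERIV_nonpos_imp_nonincreasing[of 0 1 \<phi>])
    fix t :: real assume t: "0 \<le> t" "t \<le> 1"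
    have "(\<phi> has_real_derivative
            (inner (G (x + t *\<^sub>R d) - G x) d - \<beta> * t * (norm d)\<^sup>2)) (at t)"
      unfolding \<phi>_def
      by (auto intro!: derivative_eq_intros has_real_derivative_along_line[OF D]
          simp: power2_eq_square inner_diff_left)
    moreover have "inner (G (x + t *\<^sub>R d) - G x) d \<le> \<beta> * t * (norm d)\<^sup>2"
    proof -
      have "inner (G (x + t *\<^sub>R d) - G x) d \<le> norm (G (x + t *\<^sub>R d) - G x) * norm d"
        by (rule norm_cauchy_schwarz)
      also have "\<dots> \<le> \<beta> * norm (t *\<^sub>R d) * norm d"
        using lipschitz_onD[OF L, of "x + t *\<^sub>R d" x] by (simp add: dist_norm mult_right_mono)
      also have "\<dots> = \<beta> * t * (norm d)\<^sup>2" using t by (simp add: power2_eq_square)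
      finally show ?thesis .
    qed
    ultimately show "\<exists>y. DERIV \<phi> t :> y \<and> y \<le> 0" by force
  qed simp
  then show ?thesis unfolding \<phi>_def d_def by (simp add: algebra_simps)
qed

lemma convex_on_gradient_inequality:
  fixes k :: "'a::real_inner \<Rightarrow> real"
  assumes C: "convex_on UNIV k"
    and D: "\<And>x. (k has_derivative (\<lambda>h. inner (G x) h)) (at x)"
  shows "k x + inner (G x) (y - x) \<le> k y"
proof -
  define d where "d = y - x"
  define \<phi> where "\<phi> t = k (x + t *\<^sub>R d)" for t
  have "convex_on UNIV \<phi>"
  proof (rule convex_onI)
    fix t a b :: real assume t: "0 < t" "t < 1"
    have "x + ((1 - t) *\<^sub>R a + t *\<^sub>R b) *\<^sub>R d = (1 - t) *\<^sub>R (x + a *\<^sub>R d) + t *\<^sub>R (x + b *\<^sub>R d)"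
      by (simp add: algebra_simps)
    then show "\<phi> ((1 - t) *\<^sub>R a + t *\<^sub>R b) \<le> (1 - t) * \<phi> a + t * \<phi> b"
      unfolding \<phi>_def using convex_onD[OF C, of t] t by simp
  qed simp
  moreover have "(\<phi> has_real_derivative inner (G x) d) (at 0)"
    unfolding \<phi>_def using has_real_derivative_along_line[OF D, of x d 0] by simp
  ultimately have "\<phi> 1 - \<phi> 0 \<ge> inner (G x) d * (1 - 0)"
    by (intro convex_on_imp_above_tangent[where A=UNIV]) auto
  then show ?thesis unfolding \<phi>_def d_def by simp
qed

lemma has_derivative_scaled_norm_square:
  "((\<lambda>x::'a::real_inner. c/2 * (norm x)\<^sup>2) has_derivative (\<lambda>h. inner (c *\<^sub>R x) h)) (at x)"
proof -
  have "((\<lambda>x::'a. c/2 * inner x x) has_derivative (\<lambda>h. c/2 * (inner h x + inner x h))) (at x)"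
    by (auto intro!: derivative_eq_intros)
  then show ?thesis
    by (simp add: power2_norm_eq_inner inner_commute algebra_simps)
qed

lemma scaled_norm_square_expansion:
  fixes x y :: "'a::real_inner"
  shows "c/2 * (norm y)\<^sup>2 = c/2 * (norm x)\<^sup>2 + inner (c *\<^sub>R x) (y - x) + c/2 * (norm (y - x))\<^sup>2"
  unfolding power2_norm_eq_inner
  by (simp add: inner_diff_left inner_diff_right inner_commute algebra_simps)

lemma strongly_convex_gradient_inequality:
  fixes f :: "'a::real_inner \<Rightarrow> real"
  assumes C: "strongly_convex \<mu> f"
    and D: "\<And>x. (f has_derivative (\<lambda>h. inner (G x) h)) (at x)"
  shows "f x + inner (G x) (y - x) + \<mu>/2 * (norm (y - x))\<^sup>2 \<le> f y"
proof -
  have "((\<lambda>x. f x - \<mu>/2 * (norm x)\<^sup>2) has_derivative (\<lambda>h. inner (G x - \<mu> *\<^sub>R x) h)) (at x)" for x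
    using has_derivative_diff[OF D has_derivative_scaled_norm_square]
    by (simp add: inner_diff_left)
  from convex_on_gradient_inequality[OF C[unfolded strongly_convex_def] this, of x y]
  show ?thesis
    using scaled_norm_square_expansion[where c=\<mu> and x=x and y=y] by (simp add: inner_diff_left algebra_simps)
qed

text \<open>Baillon--Haddad, from the two first-order bounds on \<open>h\<close> alone.\<close>

lemma gradient_bounds_imp_cocoercive:
  fixes h :: "'a::real_inner \<Rightarrow> real"
  assumes lower: "\<And>x z. h x + inner (H x) (z - x) \<le> h z"
    and upper: "\<And>x z. h z \<le> h x + inner (H x) (z - x) + \<beta>/2 * (norm (z - x))\<^sup>2"
    and "\<beta> > 0"
  shows "(norm (H x - H y))\<^sup>2 \<le> \<beta> * inner (H x - H y) (x - y)"
proof -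
  have key: "h x + inner (H x) (y - x) + (norm (H y - H x))\<^sup>2 / (2*\<beta>) \<le> h y" for x y
  proof -
    define e where "e = H y - H x"
    \<comment> \<open>compare \<open>h\<close> at \<open>y\<close> and at the gradient step \<open>y - e/\<beta>\<close>\<close>
    define z where "z = y - (1/\<beta>) *\<^sub>R e"
    have "h x + inner (H x) (z - x) \<le> h z" by (rule lower)
    moreover have "h z \<le> h y + inner (H y) (z - y) + \<beta>/2 * (norm (z - y))\<^sup>2" by (rule upper)
    moreover have "inner (H x) (z - x) = inner (H x) (y - x) - inner (H x) e / \<beta>"
      "inner (H y) (z - y) = - inner (H y) e / \<beta>"
      unfolding z_def by (simp_all add: inner_diff_right algebra_simps)
    moreover have "\<beta>/2 * (norm (z - y))\<^sup>2 = (norm e)\<^sup>2 / (2*\<beta>)"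
      unfolding z_def using \<open>\<beta> > 0\<close> by (simp add: power2_eq_square field_simps)
    moreover have "inner (H y) e - inner (H x) e = (norm e)\<^sup>2"
      unfolding e_def by (simp add: power2_norm_eq_inner inner_diff_left)
    ultimately show ?thesis
      unfolding e_def[symmetric] using \<open>\<beta> > 0\<close> by (simp add: field_simps)
  qed
  have "inner (H x) (y - x) + inner (H y) (x - y) = - inner (H x - H y) (x - y)"
    by (simp add: inner_diff_left inner_diff_right algebra_simps)
  with key[of x y] key[of y x] have "(norm (H x - H y))\<^sup>2 / \<beta> \<le> inner (H x - H y) (x - y)"
    by (simp add: norm_minus_commute field_simps)
  then show ?thesis using \<open>\<beta> > 0\<close> by (simp add: field_simps)
qed

lemma strongly_convex_cocoercive:
  fixes f :: "'a::real_inner \<Rightarrow> real"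
  assumes C: "strongly_convex \<mu> f"
    and D: "\<And>x. (f has_derivative (\<lambda>h. inner (G x) h)) (at x)"
    and L: "\<beta>-lipschitz_on UNIV G" and "\<mu> \<ge> 0" and "\<beta> > 0"
  shows "(norm ((G x - \<mu> *\<^sub>R x) - (G y - \<mu> *\<^sub>R y)))\<^sup>2
     \<le> \<beta> * inner ((G x - \<mu> *\<^sub>R x) - (G y - \<mu> *\<^sub>R y)) (x - y)"
proof (rule gradient_bounds_imp_cocoercive[where h = "\<lambda>z. f z - \<mu>/2 * (norm z)\<^sup>2"])
  show "f x - \<mu>/2 * (norm x)\<^sup>2 + inner (G x - \<mu> *\<^sub>R x) (z - x) \<le> f z - \<mu>/2 * (norm z)\<^sup>2" for x z
    using strongly_convex_gradient_inequality[OF C D, of x z] scaled_norm_square_expansion[where c=\<mu> and x=x and y=z]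
    by (simp add: inner_diff_left algebra_simps)
  show "f z - \<mu>/2 * (norm z)\<^sup>2
      \<le> f x - \<mu>/2 * (norm x)\<^sup>2 + inner (G x - \<mu> *\<^sub>R x) (z - x) + \<beta>/2 * (norm (z - x))\<^sup>2" for x z
    using descent_lemma[OF D L, of z x] scaled_norm_square_expansion[where c=\<mu> and x=x and y=z]
      mult_nonneg_nonneg[OF \<open>\<mu> \<ge> 0\<close> zero_le_power2[of "norm (z - x)"]]
    by (simp add: inner_diff_left algebra_simps)
qed fact

section \<open>Convex extended-real functions and the proximal map\<close>

lemma ereal_convexD_finite:
  assumes "ereal_convex \<phi>" and "\<And>x. \<phi> x \<noteq> -\<infinity>"
    and "\<phi> x = ereal a" "\<phi> y = ereal b" "0 \<le> t" "t \<le> 1"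
  obtains c where "\<phi> (t *\<^sub>R x + (1 - t) *\<^sub>R y) = ereal c" "c \<le> t * a + (1 - t) * b"
proof -
  have "\<phi> (t *\<^sub>R x + (1 - t) *\<^sub>R y) \<le> ereal t * \<phi> x + ereal (1 - t) * \<phi> y"
    using assms unfolding ereal_convex_def by blast
  also have "\<dots> = ereal (t * a + (1 - t) * b)" using assms by simp
  finally show ?thesis
    using that assms(2)[of "t *\<^sub>R x + (1 - t) *\<^sub>R y"]
    by (cases "\<phi> (t *\<^sub>R x + (1 - t) *\<^sub>R y)") auto
qed

lemma nonneg_if_nonneg_add_small_multiple:
  fixes X C :: real
  assumes "\<And>t. 0 < t \<Longrightarrow> t \<le> 1 \<Longrightarrow> 0 \<le> X + t * C"
  shows "0 \<le> X"
proof (rule ccontr)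
  assume X: "\<not> 0 \<le> X"
  have C: "C \<ge> 0" using assms[of 1] X by simp
  define t where "t = min 1 (- X / (2*C + 1))"
  have "- X / (2*C + 1) > 0" using X C by (intro divide_pos_pos) auto
  then have t: "0 < t" "t \<le> 1" unfolding t_def by auto
  have "t * C \<le> (- X / (2*C + 1)) * C" using C unfolding t_def by (intro mult_right_mono) auto
  also have "\<dots> < - X / 2" using X C by (simp add: field_simps)
  finally show False using assms[OF t] X by linarith
qed

text \<open>Moving from \<open>x\<close> towards \<open>y\<close> by \<open>t\<close> changes \<open>F + \<psi>\<close> by at most
  \<open>t (\<langle>G, y - x\<rangle> + \<psi> y - \<psi> x) + O(t\<^sup>2)\<close>.\<close>

lemma argmin_sum_iff_variational_inequality:
  fixes F :: "'a::real_inner \<Rightarrow> real" and \<psi> :: "'a \<Rightarrow> ereal"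
  assumes lower: "\<And>y. F x + inner G (y - x) \<le> F y"
    and upper: "\<And>y. F y \<le> F x + inner G (y - x) + L/2 * (norm (y - x))\<^sup>2"
    and convex: "ereal_convex \<psi>" and ninf: "\<And>y. \<psi> y \<noteq> -\<infinity>" and fin: "\<psi> x = ereal a"
  shows "x \<in> argmin_sum F \<psi> \<longleftrightarrow> (\<forall>y b. \<psi> y = ereal b \<longrightarrow> - inner G (y - x) \<le> b - a)"
proof
  assume min: "x \<in> argmin_sum F \<psi>"
  show "\<forall>y b. \<psi> y = ereal b \<longrightarrow> - inner G (y - x) \<le> b - a"
  proof (intro allI impI)
    fix y b assume b: "\<psi> y = ereal b"
    have "0 \<le> (b - a + inner G (y - x)) + t * (L/2 * (norm (y - x))\<^sup>2)"
      if t: "0 < t" "t \<le> 1" for t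
    proof -
      define yt where "yt = t *\<^sub>R y + (1 - t) *\<^sub>R x"
      have yt: "yt - x = t *\<^sub>R (y - x)" unfolding yt_def by (simp add: algebra_simps)
      obtain c where c: "\<psi> yt = ereal c" "c \<le> t * b + (1 - t) * a"
        by (rule ereal_convexD_finite[OF convex ninf b fin, of t]) (use t in \<open>auto simp: yt_def\<close>)
      have "ereal (F x) + \<psi> x \<le> ereal (F yt) + \<psi> yt"
        using min unfolding argmin_sum_def by blast
      then have "F x + a \<le> F yt + c" using fin c by simp
      moreover have "F yt \<le> F x + t * inner G (y - x) + t * (t * (L/2 * (norm (y - x))\<^sup>2))"
        using upper[of yt] t unfolding yt by (simp add: power_mult_distrib power2_eq_square mult_ac)
      ultimately have "0 \<le> t * ((b - a + inner G (y - x)) + t * (L/2 * (norm (y - x))\<^sup>2))"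
        using c(2) by (simp add: algebra_simps)
      then show ?thesis using t by (simp add: zero_le_mult_iff)
    qed
    from nonneg_if_nonneg_add_small_multiple[OF this] show "- inner G (y - x) \<le> b - a" by simp
  qed
next
  assume vi: "\<forall>y b. \<psi> y = ereal b \<longrightarrow> - inner G (y - x) \<le> b - a"
  have "ereal (F x) + \<psi> x \<le> ereal (F y) + \<psi> y" for y
  proof (cases "\<psi> y")
    case (real b)
    then show ?thesis using vi lower[of y] fin by force
  qed (use ninf fin in auto)
  then show "x \<in> argmin_sum F \<psi>" unfolding argmin_sum_def by blast
qed

lemma argmin_sum_cong_shift:
  assumes "\<And>y. ereal (f y) + g y = ereal (f' y) + g' y + ereal K"
  shows "argmin_sum f g = argmin_sum f' g'"
  unfolding argmin_sum_def assms by (simp add: ereal_add_le_add_iff2)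

lemma argmin_sum_finite:
  assumes "proper_fun g" and "x \<in> argmin_sum f g"
  obtains a where "g x = ereal a"
proof -
  obtain y where "g y \<noteq> \<infinity>" using assms(1) unfolding proper_fun_def by blast
  moreover have "ereal (f x) + g x \<le> ereal (f y) + g y"
    using assms(2) unfolding argmin_sum_def by blast
  ultimately have "g x \<noteq> \<infinity>" by auto
  with assms(1) show ?thesis using that unfolding proper_fun_def by (cases "g x") auto
qed

definition prox_penalty :: "real \<Rightarrow> 'a::real_normed_vector \<Rightarrow> 'a \<Rightarrow> real" where
  "prox_penalty \<tau> a y = (norm (a - y))\<^sup>2 / (2 * \<tau>)"

lemma prox_eq_iff:
  assumes "\<exists>!p. p \<in> argmin_sum (prox_penalty \<tau> a) \<phi>"
  shows "prox \<tau> \<phi> a = p \<longleftrightarrow> p \<in> argmin_sum (prox_penalty \<tau> a) \<phi>"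
proof -
  have prox: "prox \<tau> \<phi> a = (THE p. p \<in> argmin_sum (prox_penalty \<tau> a) \<phi>)"
    unfolding prox_def argmin_sum_def prox_penalty_def by (simp add: add.commute)
  show ?thesis
  proof
    assume "prox \<tau> \<phi> a = p"
    with theI'[OF assms] show "p \<in> argmin_sum (prox_penalty \<tau> a) \<phi>" unfolding prox by simp
  qed (simp add: prox the1_equality[OF assms])
qed

lemma argmin_prox_penalty_iff:
  fixes \<phi> :: "'a::real_inner \<Rightarrow> ereal"
  assumes "ereal_convex \<phi>" and "\<And>y. \<phi> y \<noteq> -\<infinity>" and "\<phi> p = ereal c" and "\<tau> > 0"
  shows "p \<in> argmin_sum (prox_penalty \<tau> a) \<phi>
     \<longleftrightarrow> (\<forall>y b. \<phi> y = ereal b \<longrightarrow> inner (a - p) (y - p) / \<tau> \<le> b - c)"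
proof -
  define G where "G = (1/\<tau>) *\<^sub>R (p - a)"
  have expand: "prox_penalty \<tau> a y = prox_penalty \<tau> a p + inner G (y - p) + (1/\<tau>)/2 * (norm (y - p))\<^sup>2" for y
    using scaled_norm_square_expansion[where c="1/\<tau>" and x="p - a" and y="y - a"]
    unfolding prox_penalty_def G_def by (simp add: norm_minus_commute field_simps)
  have "- inner G (y - p) = inner (a - p) (y - p) / \<tau>" for y
    unfolding G_def by (simp add: inner_diff_left diff_divide_distrib)
  moreover have "prox_penalty \<tau> a p + inner G (y - p) \<le> prox_penalty \<tau> a y" for y
  proof -
    have "0 \<le> (1/\<tau>)/2 * (norm (y - p))\<^sup>2" using \<open>\<tau> > 0\<close> by simp
    then show ?thesis using expand[of y] by linarith
  qed
  ultimately show ?thesis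
    using argmin_sum_iff_variational_inequality[OF _ order_eq_refl[OF expand] assms(1-3)] by simp
qed

lemma argmin_prox_penalty_firmly_nonexpansive:
  fixes \<phi> :: "'a::real_inner \<Rightarrow> ereal"
  assumes convex: "ereal_convex \<phi>" and proper: "proper_fun \<phi>" and "\<tau> > 0"
    and p: "p \<in> argmin_sum (prox_penalty \<tau> a) \<phi>" and q: "q \<in> argmin_sum (prox_penalty \<tau> b) \<phi>"
  shows "(norm (p - q))\<^sup>2 \<le> inner (a - b) (p - q)"
proof -
  have ninf: "\<And>y. \<phi> y \<noteq> -\<infinity>" using proper unfolding proper_fun_def by blast
  obtain cp where cp: "\<phi> p = ereal cp" using argmin_sum_finite[OF proper p] .
  obtain cq where cq: "\<phi> q = ereal cq" using argmin_sum_finite[OF proper q] .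
  have "\<forall>y v. \<phi> y = ereal v \<longrightarrow> inner (a - p) (y - p) / \<tau> \<le> v - cp"
    using p argmin_prox_penalty_iff[OF convex ninf cp \<open>\<tau> > 0\<close>] by blast
  moreover have "\<forall>y v. \<phi> y = ereal v \<longrightarrow> inner (b - q) (y - q) / \<tau> \<le> v - cq"
    using q argmin_prox_penalty_iff[OF convex ninf cq \<open>\<tau> > 0\<close>] by blast
  ultimately have "inner (a - p) (q - p) / \<tau> \<le> cq - cp" "inner (b - q) (p - q) / \<tau> \<le> cp - cq"
    using cp cq by blast+
  then have "inner (a - p) (q - p) + inner (b - q) (p - q) \<le> 0"
    using \<open>\<tau> > 0\<close> by (simp add: field_simps)
  moreover have "inner (a - p) (q - p) + inner (b - q) (p - q) = (norm (p - q))\<^sup>2 - inner (a - b) (p - q)"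
    unfolding power2_norm_eq_inner by (simp add: inner_diff_left inner_diff_right inner_commute)
  ultimately show ?thesis by linarith
qed

lemma argmin_prox_penalty_hypoconvex_shift:
  fixes g :: "'a::real_inner \<Rightarrow> ereal"
  assumes "\<gamma> > 0" and c: "c = 1 - \<gamma> * \<omega>" "c > 0"
  shows "argmin_sum (prox_penalty \<gamma> u) g
       = argmin_sum (prox_penalty (\<gamma>/c) ((1/c) *\<^sub>R u)) (\<lambda>x. g x + ereal (\<omega>/2 * (norm x)\<^sup>2))"
proof (rule argmin_sum_cong_shift)
  fix y
  have "prox_penalty \<gamma> u y = \<omega>/2 * (norm y)\<^sup>2 + prox_penalty (\<gamma>/c) ((1/c) *\<^sub>R u) y
          + ((norm u)\<^sup>2 / (2*\<gamma>) - (norm u)\<^sup>2 / (2*\<gamma>*c))"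
  proof -
    have e1: "(norm (u - y))\<^sup>2 = (norm u)\<^sup>2 - 2 * inner u y + (norm y)\<^sup>2"
      and e2: "(norm ((1/c) *\<^sub>R u - y))\<^sup>2 = (norm u)\<^sup>2 / c^2 - 2 * inner u y / c + (norm y)\<^sup>2"
      unfolding power2_norm_eq_inner
      by (simp_all add: inner_diff_left inner_diff_right inner_commute power2_eq_square)
    have \<omega>: "\<omega> = (1 - c) / \<gamma>" using \<open>\<gamma> > 0\<close> c by (simp add: field_simps)
    have "(nu - 2 * i + ny) / (2 * \<gamma>) = (1 - c) / \<gamma> / 2 * ny + (nu / c^2 - 2 * i / c + ny) / (2 * (\<gamma> / c))
          + (nu / (2*\<gamma>) - nu / (2*\<gamma>*c))" for nu ny i
      using \<open>\<gamma> > 0\<close> \<open>c > 0\<close> by (simp add: field_simps power2_eq_square)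
    then show ?thesis unfolding prox_penalty_def e1 e2 \<omega> .
  qed
  then show "ereal (prox_penalty \<gamma> u y) + g y
      = ereal (prox_penalty (\<gamma>/c) ((1/c) *\<^sub>R u) y) + (g y + ereal (\<omega>/2 * (norm y)\<^sup>2))
        + ereal ((norm u)\<^sup>2 / (2*\<gamma>) - (norm u)\<^sup>2 / (2*\<gamma>*c))"
    by (simp add: ac_simps)
qed

lemma lsc_fun_add_continuous:
  fixes \<phi> :: "'a::metric_space \<Rightarrow> ereal"
  assumes lsc: "lsc_fun \<phi>" and ninf: "\<And>x. \<phi> x \<noteq> -\<infinity>" and q: "continuous_on UNIV q"
  shows "lsc_fun (\<lambda>x. \<phi> x + ereal (q x))"
  unfolding lsc_fun_def
proof
  fix c :: ereal
  show "closed {x. \<phi> x + ereal (q x) \<le> c}"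
  proof (cases c)
    case (real c0)
    show ?thesis unfolding closed_sequential_limits
    proof (intro allI impI, elim conjE)
      fix s l assume s: "\<forall>n. s n \<in> {x. \<phi> x + ereal (q x) \<le> c}" and lim: "s \<longlonglongrightarrow> l"
      have ql: "(\<lambda>n. q (s n)) \<longlonglongrightarrow> q l"
        using continuous_on_tendsto_compose[OF q lim] by simp
      have "\<phi> l \<le> ereal (c0 - q l) + ereal e" if "e > 0" for e
      proof -
        have "eventually (\<lambda>n. q (s n) > q l - e) sequentially"
          using order_tendstoD(1)[OF ql, of "q l - e"] \<open>e > 0\<close> by simp
        then have "eventually (\<lambda>n. s n \<in> {x. \<phi> x \<le> ereal (c0 - q l + e)}) sequentially"
        proof (rule eventually_mono)
          fix n assume "q (s n) > q l - e"
          moreover have "\<phi> (s n) + ereal (q (s n)) \<le> ereal c0" using s real by auto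
          ultimately show "s n \<in> {x. \<phi> x \<le> ereal (c0 - q l + e)}"
            using ninf[of "s n"] by (cases "\<phi> (s n)") auto
        qed
        from Lim_in_closed_set[OF _ this trivial_limit_sequentially lim] lsc
        show ?thesis unfolding lsc_fun_def by simp
      qed
      then have "\<phi> l \<le> ereal (c0 - q l)" by (rule ereal_le_epsilon2)
      then show "l \<in> {x. \<phi> x + ereal (q x) \<le> c}"
        using real ninf[of l] by (cases "\<phi> l") auto
    qed
  next
    case MInf
    then have "{x. \<phi> x + ereal (q x) \<le> c} = {}" using ninf by auto
    then show ?thesis by simp
  qed simp
qed

lemma minimising_seq_Cauchy_if_midpoint_gap:
  fixes ys :: "nat \<Rightarrow> 'a::real_normed_vector"
  assumes gap: "\<And>n k. \<kappa> * (norm (ys n - ys k))\<^sup>2 \<le> (vs n + vs k)/2 - i"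
    and "\<kappa> > 0" and approx: "\<And>n. vs n < i + 1 / Suc n"
  shows "Cauchy ys"
proof (rule metric_CauchyI)
  fix e :: real assume "e > 0"
  then have "eventually (\<lambda>n. 1 / real (Suc n) < \<kappa> * e\<^sup>2) sequentially"
    using order_tendstoD(2)[OF LIMSEQ_inverse_real_of_nat, of "\<kappa> * e\<^sup>2"] \<open>\<kappa> > 0\<close>
    by (simp add: inverse_eq_divide)
  then obtain N where N: "\<And>n. n \<ge> N \<Longrightarrow> 1 / real (Suc n) < \<kappa> * e\<^sup>2"
    by (auto simp: eventually_sequentially)
  have "dist (ys n) (ys k) < e" if "n \<ge> N" "k \<ge> N" for n k
  proof -
    have "\<kappa> * (norm (ys n - ys k))\<^sup>2 < \<kappa> * e\<^sup>2"
      using gap[of n k] approx[of n] approx[of k] N[OF \<open>n \<ge> N\<close>] N[OF \<open>k \<ge> N\<close>]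
      unfolding add_divide_distrib by linarith
    then have "(norm (ys n - ys k))\<^sup>2 < e\<^sup>2" using \<open>\<kappa> > 0\<close> by simp
    then show ?thesis using \<open>e > 0\<close> by (simp add: dist_norm power_less_imp_less_base)
  qed
  then show "\<exists>N. \<forall>n\<ge>N. \<forall>k\<ge>N. dist (ys n) (ys k) < e" by blast
qed

text \<open>The midpoint of two almost-minimisers cannot lie below the infimum, so minimising sequences
  are Cauchy.\<close>

lemma lsc_strongly_midconvex_ex1_minimiser:
  fixes \<Phi> :: "'a::{real_normed_vector, complete_space} \<Rightarrow> ereal"
  assumes lsc: "lsc_fun \<Phi>" and finite: "\<Phi> x0 = ereal m"
    and bounded: "\<And>x. ereal K \<le> \<Phi> x" and "\<kappa> > 0"
    and midconvex: "\<And>y z v w. \<Phi> y = ereal v \<Longrightarrow> \<Phi> z = ereal w \<Longrightarrow>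
       \<Phi> ((1/2) *\<^sub>R y + (1/2) *\<^sub>R z) \<le> ereal ((v + w)/2 - \<kappa> * (norm (y - z))\<^sup>2)"
  shows "\<exists>!p. \<forall>y. \<Phi> p \<le> \<Phi> y"
proof -
  define S where "S = {v. \<exists>y. \<Phi> y = ereal v}"
  have S: "S \<noteq> {}" using finite unfolding S_def by blast
  have "K \<le> v" if "v \<in> S" for v
  proof -
    obtain y where "\<Phi> y = ereal v" using \<open>v \<in> S\<close> unfolding S_def by blast
    with bounded[of y] show ?thesis by simp
  qed
  then have "bdd_below S" by (rule bdd_belowI)
  define i where "i = Inf S"
  have inf: "i \<le> v" if "\<Phi> y = ereal v" for y v
    unfolding i_def using \<open>bdd_below S\<close> that by (intro cInf_lower) (auto simp: S_def)
  have gap: "\<kappa> * (norm (y - z))\<^sup>2 \<le> (v + w)/2 - i" if "\<Phi> y = ereal v" "\<Phi> z = ereal w" for y z v w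
  proof -
    let ?mid = "(1/2) *\<^sub>R y + (1/2) *\<^sub>R z"
    have le: "\<Phi> ?mid \<le> ereal ((v + w)/2 - \<kappa> * (norm (y - z))\<^sup>2)" using midconvex that .
    obtain c where c: "\<Phi> ?mid = ereal c"
      using le bounded[of ?mid] by (cases "\<Phi> ?mid") auto
    show ?thesis using le inf[OF c] unfolding c by simp
  qed
  have "\<exists>y v. \<Phi> y = ereal v \<and> v < i + 1 / Suc n" for n
  proof -
    have "Inf S < i + 1 / Suc n" unfolding i_def by simp
    from cInf_lessD[OF S this] show ?thesis unfolding S_def by blast
  qed
  then obtain ys vs where ys: "\<And>n. \<Phi> (ys n) = ereal (vs n)" "\<And>n. vs n < i + 1 / Suc n"
    by metis
  have "Cauchy ys"
    by (rule minimising_seq_Cauchy_if_midpoint_gap[OF gap[OF ys(1) ys(1)] \<open>\<kappa> > 0\<close> ys(2)])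
  then obtain p where p: "ys \<longlonglongrightarrow> p" using Cauchy_convergent_iff convergent_def by blast
  have "\<Phi> p \<le> ereal i + ereal e" if "e > 0" for e
  proof -
    have "eventually (\<lambda>n. 1 / real (Suc n) < e) sequentially"
      using order_tendstoD(2)[OF LIMSEQ_inverse_real_of_nat that] by (simp add: inverse_eq_divide)
    then have "eventually (\<lambda>n. ys n \<in> {x. \<Phi> x \<le> ereal (i + e)}) sequentially"
    proof (rule eventually_mono)
      fix n assume "1 / real (Suc n) < e"
      with ys(1)[of n] ys(2)[of n] show "ys n \<in> {x. \<Phi> x \<le> ereal (i + e)}" by simp
    qed
    from Lim_in_closed_set[OF _ this trivial_limit_sequentially p] lsc
    show ?thesis unfolding lsc_fun_def by simp
  qed
  then have le_i: "\<Phi> p \<le> ereal i" by (rule ereal_le_epsilon2)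
  have i_le: "ereal i \<le> \<Phi> y" for y
    using inf bounded[of y] by (cases "\<Phi> y") auto
  have min: "\<Phi> p = ereal i" using le_i i_le[of p] by simp
  show ?thesis
  proof (rule ex1I[of _ p])
    show "\<forall>y. \<Phi> p \<le> \<Phi> y" using min i_le by simp
  next
    fix p' assume "\<forall>y. \<Phi> p' \<le> \<Phi> y"
    then have "\<Phi> p' = ereal i" using min i_le[of p'] by (metis order_antisym)
    from gap[OF this min] \<open>\<kappa> > 0\<close> show "p' = p" by (simp add: mult_le_0_iff)
  qed
qed

lemma ereal_convex_lsc_linear_minorant:
  fixes \<phi> :: "'a::real_normed_vector \<Rightarrow> ereal"
  assumes convex: "ereal_convex \<phi>" and lsc: "lsc_fun \<phi>" and ninf: "\<And>x. \<phi> x \<noteq> -\<infinity>"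
    and m: "\<phi> x0 = ereal m"
  obtains r where "r > 0" "\<And>y. ereal (m - 1 - 2 * norm (y - x0) / r) \<le> \<phi> y"
proof -
  have "open (- {x. \<phi> x \<le> ereal (m - 1)})" using lsc unfolding lsc_fun_def by auto
  moreover have "x0 \<in> - {x. \<phi> x \<le> ereal (m - 1)}" using m by simp
  ultimately obtain r where r: "r > 0" "ball x0 r \<subseteq> - {x. \<phi> x \<le> ereal (m - 1)}"
    using open_contains_ball by blast
  have near: "m - 1 < v" if "norm (y - x0) < r" "\<phi> y = ereal v" for y v
    using r(2) that by (auto simp: dist_norm norm_minus_commute)
  have "m - 1 - 2 * norm (y - x0) / r \<le> v" if v: "\<phi> y = ereal v" for y v
  proof (cases "norm (y - x0) < r")
    case True
    with near[OF _ v] r show ?thesis by (smt (verit) divide_nonneg_pos norm_ge_zero)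
  next
    case False
    \<comment> \<open>the point at distance \<open>r/2\<close> from \<open>x0\<close> towards \<open>y\<close> lies in the ball\<close>
    define s where "s = norm (y - x0)"
    have s: "s \<ge> r" "s > 0" using False r unfolding s_def by auto
    define t where "t = r / (2 * s)"
    have t: "0 < t" "t \<le> 1" using s r unfolding t_def by (auto simp: field_simps)
    obtain c where c: "\<phi> (t *\<^sub>R y + (1 - t) *\<^sub>R x0) = ereal c" "c \<le> t * v + (1 - t) * m"
      by (rule ereal_convexD_finite[OF convex ninf v m, of t]) (use t in auto)
    have "norm (t *\<^sub>R y + (1 - t) *\<^sub>R x0 - x0) = t * s"
      unfolding s_def using t by (simp add: algebra_simps flip: scaleR_diff_right)
    also have "\<dots> < r" using s r unfolding t_def by (simp add: field_simps)
    finally have "m - 1 < t * v + (1 - t) * m" using near[OF _ c(1)] c(2) by linarith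
    then have "- 1 / t < v - m" using t by (simp add: field_simps)
    moreover have "1 / t = 2 * s / r" unfolding t_def using s r by simp
    ultimately show ?thesis unfolding s_def by (simp add: field_simps)
  qed
  then have "ereal (m - 1 - 2 * norm (y - x0) / r) \<le> \<phi> y" for y
    using ninf[of y] by (cases "\<phi> y") auto
  with r(1) show ?thesis using that by blast
qed

lemma norm_diff_midpoint_square:
  fixes a y z :: "'a::real_inner"
  shows "(norm (a - ((1/2) *\<^sub>R y + (1/2) *\<^sub>R z)))\<^sup>2
       = ((norm (a - y))\<^sup>2 + (norm (a - z))\<^sup>2)/2 - (norm (y - z))\<^sup>2 / 4"
  unfolding power2_norm_eq_inner
  by (simp add: inner_diff_left inner_diff_right inner_add_left inner_add_right inner_commute
      algebra_simps) (simp add: field_simps)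

lemma argmin_prox_penalty_ex1:
  fixes \<phi> :: "'a::{real_inner, complete_space} \<Rightarrow> ereal"
  assumes convex: "ereal_convex \<phi>" and lsc: "lsc_fun \<phi>" and proper: "proper_fun \<phi>" and "\<tau> > 0"
  shows "\<exists>!p. p \<in> argmin_sum (prox_penalty \<tau> a) \<phi>"
proof -
  have ninf: "\<And>x. \<phi> x \<noteq> -\<infinity>" using proper unfolding proper_fun_def by blast
  obtain x0 m where m: "\<phi> x0 = ereal m"
    using proper unfolding proper_fun_def by (metis ereal_cases)
  obtain r where "r > 0" and minorant: "\<And>y. ereal (m - 1 - 2 * norm (y - x0) / r) \<le> \<phi> y"
    using ereal_convex_lsc_linear_minorant[OF convex lsc ninf m] by blast
  define \<Phi> where "\<Phi> y = \<phi> y + ereal (prox_penalty \<tau> a y)" for y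
  have lsc_\<Phi>: "lsc_fun \<Phi>"
    unfolding \<Phi>_def prox_penalty_def using \<open>\<tau> > 0\<close>
    by (intro lsc_fun_add_continuous[OF lsc ninf] continuous_intros) auto
  have finite_\<Phi>: "\<Phi> x0 = ereal (m + prox_penalty \<tau> a x0)" unfolding \<Phi>_def m by simp
  have bounded_\<Phi>: "ereal (m - 1 - 2*\<tau>/r^2 - 2 * norm (a - x0) / r) \<le> \<Phi> y" for y
  proof -
    define u where "u = norm (a - y)"
    have "norm (y - x0) \<le> u + norm (a - x0)"
      unfolding u_def using norm_triangle_ineq[of "y - a" "a - x0"] by (simp add: norm_minus_commute)
    then have "2 * norm (y - x0) / r \<le> 2 * u / r + 2 * norm (a - x0) / r"
      using \<open>r > 0\<close> by (simp add: field_simps)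
    moreover have "2 * u / r \<le> u\<^sup>2 / (2*\<tau>) + 2*\<tau>/r^2"
    proof -
      have "0 \<le> (u - 2*\<tau>/r)\<^sup>2 / (2*\<tau>)" using \<open>\<tau> > 0\<close> by simp
      also have "\<dots> = u\<^sup>2 / (2*\<tau>) - 2 * u / r + 2*\<tau>/r^2"
        using \<open>\<tau> > 0\<close> \<open>r > 0\<close> by (simp add: power2_eq_square field_simps)
      finally show ?thesis by simp
    qed
    ultimately have "m - 1 - 2*\<tau>/r^2 - 2 * norm (a - x0) / r
        \<le> (m - 1 - 2 * norm (y - x0) / r) + prox_penalty \<tau> a y"
      unfolding prox_penalty_def u_def by linarith
    also have "ereal \<dots> \<le> \<Phi> y"
      unfolding \<Phi>_def plus_ereal.simps(1)[symmetric] using minorant[of y] by (rule add_right_mono)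
    finally show ?thesis by simp
  qed
  have midconvex_\<Phi>:
    "\<Phi> ((1/2) *\<^sub>R y + (1/2) *\<^sub>R z) \<le> ereal ((v + w)/2 - 1/(8*\<tau>) * (norm (y - z))\<^sup>2)"
    if v: "\<Phi> y = ereal v" and w: "\<Phi> z = ereal w" for y z v w
  proof -
    let ?mid = "(1/2) *\<^sub>R y + (1/2) *\<^sub>R z"
    obtain vy where vy: "\<phi> y = ereal vy" using v ninf[of y] unfolding \<Phi>_def by (cases "\<phi> y") auto
    obtain wz where wz: "\<phi> z = ereal wz" using w ninf[of z] unfolding \<Phi>_def by (cases "\<phi> z") auto
    obtain c where c: "\<phi> ?mid = ereal c" "c \<le> (vy + wz)/2"
      by (rule ereal_convexD_finite[OF convex ninf vy wz, of "1/2"]) auto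
    have "prox_penalty \<tau> a ?mid
        = (prox_penalty \<tau> a y + prox_penalty \<tau> a z)/2 - 1/(8*\<tau>) * (norm (y - z))\<^sup>2"
      unfolding prox_penalty_def norm_diff_midpoint_square using \<open>\<tau> > 0\<close> by (simp add: field_simps)
    moreover have "v = vy + prox_penalty \<tau> a y" "w = wz + prox_penalty \<tau> a z"
      using v w vy wz unfolding \<Phi>_def by simp_all
    ultimately show ?thesis
      unfolding \<Phi>_def c(1) using c(2) by (simp add: field_simps)
  qed
  have "\<exists>!p. \<forall>y. \<Phi> p \<le> \<Phi> y"
    by (rule lsc_strongly_midconvex_ex1_minimiser[OF lsc_\<Phi> finite_\<Phi> bounded_\<Phi> _ midconvex_\<Phi>])
      (use \<open>\<tau> > 0\<close> in simp)
  moreover have "p \<in> argmin_sum (prox_penalty \<tau> a) \<phi> \<longleftrightarrow> (\<forall>y. \<Phi> p \<le> \<Phi> y)" for p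
    unfolding argmin_sum_def \<Phi>_def by (simp add: add.commute)
  ultimately show ?thesis by simp
qed

section \<open>Riesz representation and weak sequential compactness\<close>

lemma ereal_convex_extend_infinity:
  fixes h :: "'a::real_vector \<Rightarrow> real"
  assumes V: "convex V"
    and h: "\<And>x y t. x \<in> V \<Longrightarrow> y \<in> V \<Longrightarrow> 0 \<le> t \<Longrightarrow> t \<le> 1 \<Longrightarrow>
       h (t *\<^sub>R x + (1 - t) *\<^sub>R y) \<le> t * h x + (1 - t) * h y"
  shows "ereal_convex (\<lambda>x. if x \<in> V then ereal (h x) else \<infinity>)"
  unfolding ereal_convex_def
proof (intro allI impI, elim conjE)
  fix x y :: 'a and t :: real assume t: "0 \<le> t" "t \<le> 1"
  show "(if t *\<^sub>R x + (1 - t) *\<^sub>R y \<in> V then ereal (h (t *\<^sub>R x + (1 - t) *\<^sub>R y)) else \<infinity>)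
        \<le> ereal t * (if x \<in> V then ereal (h x) else \<infinity>) + ereal (1 - t) * (if y \<in> V then ereal (h y) else \<infinity>)"
  proof (cases "x \<in> V \<and> y \<in> V")
    case True
    then have "t *\<^sub>R x + (1 - t) *\<^sub>R y \<in> V" using V t unfolding convex_def by auto
    then show ?thesis using True h[of x y t] t by simp
  next
    case False
    \<comment> \<open>the right-hand side is \<open>\<infinity>\<close> unless the point outside \<open>V\<close> carries weight \<open>0\<close>\<close>
    then consider "x \<notin> V" "t = 0" | "y \<notin> V" "t = 1" | "x \<notin> V" "t > 0" | "y \<notin> V" "t < 1"
      using t by fastforce
    then show ?thesis
      by cases (use False in \<open>auto simp: ereal_mult_infty\<close>)
  qed
qed

lemma riesz_representation_closed_subspace:
  fixes V :: "'a::{real_inner,complete_space} set" and L :: "'a \<Rightarrow> real"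
  assumes S: "subspace V" and "closed V"
    and add: "\<And>x y. x \<in> V \<Longrightarrow> y \<in> V \<Longrightarrow> L (x + y) = L x + L y"
    and scale: "\<And>c x. x \<in> V \<Longrightarrow> L (c *\<^sub>R x) = c * L x"
    and bounded: "\<And>x. x \<in> V \<Longrightarrow> \<bar>L x\<bar> \<le> M * norm x" and "M \<ge> 0"
  obtains z where "z \<in> V" "\<And>w. w \<in> V \<Longrightarrow> L w = inner z w"
proof -
  \<comment> \<open>the representer is the prox at \<open>0\<close> of \<open>-L\<close> restricted to \<open>V\<close>\<close>
  define \<phi> where "\<phi> x = (if x \<in> V then ereal (- L x) else \<infinity>)" for x
  have V0: "0 \<in> V" using S by (simp add: subspace_0)
  have diff: "L x - L y = L (x - y)" "x - y \<in> V" if "x \<in> V" "y \<in> V" for x y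
    using add[of "x - y" y] that S by (auto simp: subspace_diff)
  have convex: "ereal_convex \<phi>" unfolding \<phi>_def
    by (rule ereal_convex_extend_infinity[OF subspace_imp_convex[OF S]])
      (simp add: add scale S subspace_scale)
  have proper: "proper_fun \<phi>" unfolding proper_fun_def \<phi>_def using V0 by auto
  have "M-lipschitz_on V (\<lambda>x. - L x)"
  proof (rule lipschitz_onI)
    fix x y assume "x \<in> V" "y \<in> V"
    then show "dist (- L x) (- L y) \<le> M * dist x y"
      using bounded[of "x - y"] diff[of x y] by (simp add: dist_norm dist_real_def abs_minus_commute)
  qed fact
  then have cont: "continuous_on V (\<lambda>x. - L x)" by (rule lipschitz_on_continuous_on)
  have lsc: "lsc_fun \<phi>" unfolding lsc_fun_def
  proof
    fix c :: ereal
    show "closed {x. \<phi> x \<le> c}"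
    proof (cases c)
      case (real c0)
      have "{x. \<phi> x \<le> c} = {x \<in> V. - L x \<le> c0}" unfolding \<phi>_def real by auto
      with continuous_on_closed_Collect_le[OF cont continuous_on_const \<open>closed V\<close>]
      show ?thesis by simp
    next
      case MInf
      then have "{x. \<phi> x \<le> c} = {}" unfolding \<phi>_def by auto
      then show ?thesis by simp
    qed simp
  qed
  obtain p where p: "p \<in> argmin_sum (prox_penalty 1 0) \<phi>"
    using argmin_prox_penalty_ex1[OF convex lsc proper, of 1 0] by auto
  then obtain cp where cp: "\<phi> p = ereal cp" using argmin_sum_finite[OF proper] by blast
  then have pV: "p \<in> V" and cp_eq: "cp = - L p" unfolding \<phi>_def by (auto split: if_splits)
  have ninf: "\<phi> x \<noteq> -\<infinity>" for x unfolding \<phi>_def by simp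
  have "\<forall>y v. \<phi> y = ereal v \<longrightarrow> inner (0 - p) (y - p) / 1 \<le> v - cp"
    using p argmin_prox_penalty_iff[OF convex ninf cp, of 1 0] by simp
  then have vi: "inner (- p) (y - p) \<le> L p - L y" if "y \<in> V" for y
    using that cp_eq unfolding \<phi>_def by (auto dest: spec[of _ y] spec[of _ "- L y"])
  have "L w = inner p w" if w: "w \<in> V" for w
  proof -
    have "p + w \<in> V" "p - w \<in> V" using pV w S by (auto simp: subspace_add subspace_diff)
    with vi[of "p + w"] vi[of "p - w"] show ?thesis
      using add[OF pV w] diff[OF pV w] by (simp add: inner_diff_right inner_add_right)
  qed
  with pV show ?thesis using that by blast
qed

lemma orthogonal_projection_closed_subspace:
  fixes V :: "'a::{real_inner,complete_space} set"
  assumes "subspace V" and "closed V"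
  obtains q where "q \<in> V" "\<And>w. w \<in> V \<Longrightarrow> inner (u - q) w = 0"
proof -
  obtain z where "z \<in> V" "\<And>w. w \<in> V \<Longrightarrow> inner u w = inner z w"
    by (rule riesz_representation_closed_subspace[OF assms, of "inner u" "norm u"])
      (auto simp: inner_add_right Cauchy_Schwarz_ineq2)
  then show ?thesis using that by (auto simp: inner_diff_left)
qed

lemma bounded_seq_diagonal_inner_convergent:
  fixes x :: "nat \<Rightarrow> 'a::real_inner"
  assumes bounded: "\<And>n. norm (x n) \<le> M"
  obtains \<sigma> where "strict_mono \<sigma>" "\<And>m. convergent (\<lambda>k. inner (x (\<sigma> k)) (x m))"
proof -
  have inner_bounded: "\<bar>inner (x n) u\<bar> \<le> M * norm u" for n u
    using Cauchy_Schwarz_ineq2[of "x n" u] mult_right_mono[OF bounded[of n] norm_ge_zero[of u]]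
    by linarith
  interpret subseqs "\<lambda>m s. convergent (\<lambda>k. inner (x (s k)) (x m))"
  proof
    fix m and s :: "nat \<Rightarrow> nat" assume "strict_mono s"
    define X where "X k = inner (x (s k)) (x m)" for k
    obtain r where r: "strict_mono r" "monoseq (\<lambda>k. X (r k))" using seq_monosub by blast
    have "Bseq (\<lambda>k. X (r k))"
      unfolding X_def using inner_bounded by (intro BseqI'[of _ "M * norm (x m)"]) auto
    then have "convergent (\<lambda>k. X (r k))" using r(2) by (rule Bseq_monoseq_convergent)
    then show "\<exists>r'. strict_mono r' \<and> convergent (\<lambda>k. inner (x ((s \<circ> r') k)) (x m))"
      using r(1) unfolding X_def by (intro exI[of _ r]) auto
  qed
  have "convergent (\<lambda>k. inner (x (diagseq k)) (x m))" for m
  proof -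
    have "convergent (\<lambda>k. inner (x ((diagseq \<circ> (+) (Suc m)) k)) (x m))"
    proof (rule diagseq_holds)
      fix r s :: "nat \<Rightarrow> nat" and n
      assume "strict_mono r" "convergent (\<lambda>k. inner (x (s k)) (x n))"
      from convergent_subseq_convergent[OF this(2) this(1)]
      show "convergent (\<lambda>k. inner (x ((s \<circ> r) k)) (x n))" by (simp add: o_def)
    qed
    then have "convergent (\<lambda>k. inner (x (diagseq (k + Suc m))) (x m))"
      by (simp add: o_def add.commute)
    then show ?thesis by (rule convergent_ignore_initial_segment[THEN iffD1])
  qed
  with subseq_diagseq show ?thesis by (rule that)
qed

lemma closed_convergent_inner:
  fixes y :: "nat \<Rightarrow> 'a::real_inner"
  assumes bounded: "\<And>k. norm (y k) \<le> M"
  shows "closed {v. convergent (\<lambda>k. inner (y k) v)}"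
  unfolding closed_sequential_limits
proof (intro allI impI, elim conjE)
  fix vs v assume vs: "\<forall>n. vs n \<in> {v. convergent (\<lambda>k. inner (y k) v)}" and "vs \<longlonglongrightarrow> v"
  have M: "M \<ge> 0" using bounded[of 0] norm_ge_zero[of "y 0"] by linarith
  have "Cauchy (\<lambda>k. inner (y k) v)"
  proof (rule metric_CauchyI)
    fix e :: real assume "e > 0"
    moreover have "e / (4 * (M + 1)) > 0" using \<open>e > 0\<close> M by simp
    ultimately obtain n where n: "norm (vs n - v) < e / (4 * (M + 1))"
      using \<open>vs \<longlonglongrightarrow> v\<close> unfolding LIMSEQ_iff by blast
    have close: "\<bar>inner (y k) v - inner (y k) (vs n)\<bar> < e/4" for k
    proof -
      have "\<bar>inner (y k) v - inner (y k) (vs n)\<bar> \<le> norm (y k) * norm (v - vs n)"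
        using Cauchy_Schwarz_ineq2[of "y k" "v - vs n"] by (simp add: inner_diff_right)
      also have "\<dots> \<le> M * (e / (4 * (M + 1)))"
        using n M bounded[of k] by (intro mult_mono) (auto simp: norm_minus_commute)
      also have "\<dots> < e/4" using M \<open>e > 0\<close> by (simp add: field_simps)
      finally show ?thesis .
    qed
    have "Cauchy (\<lambda>k. inner (y k) (vs n))" using vs by (simp add: Cauchy_convergent_iff)
    then obtain N where N: "\<And>k l. k \<ge> N \<Longrightarrow> l \<ge> N \<Longrightarrow> dist (inner (y k) (vs n)) (inner (y l) (vs n)) < e/2"
      using metric_CauchyD[of _ "e/2"] \<open>e > 0\<close> by (meson half_gt_zero)
    have "dist (inner (y k) v) (inner (y l) v) < e" if "k \<ge> N" "l \<ge> N" for k l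
      using N[OF that] close[of k] close[of l] unfolding dist_real_def by linarith
    then show "\<exists>N. \<forall>k\<ge>N. \<forall>l\<ge>N. dist (inner (y k) v) (inner (y l) v) < e" by blast
  qed
  then show "v \<in> {v. convergent (\<lambda>k. inner (y k) v)}" by (simp add: Cauchy_convergent_iff)
qed

text \<open>After a diagonal argument the inner products
  with all \<open>x m\<close> converge; they then converge on the closed subspace these span, and trivially
  on its orthogonal complement. The limit functional is represented by Riesz.\<close>

lemma bounded_seq_weakly_convergent_subseq:
  fixes x :: "nat \<Rightarrow> 'a::{real_inner,complete_space}"
  assumes bounded: "\<And>n. norm (x n) \<le> M"
  obtains \<sigma> z where "strict_mono \<sigma>" "weakly_converges (x \<circ> \<sigma>) z"
proof -
  obtain \<sigma> where \<sigma>: "strict_mono \<sigma>" "\<And>m. convergent (\<lambda>k. inner (x (\<sigma> k)) (x m))"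
    using bounded_seq_diagonal_inner_convergent[of x M, OF bounded] by blast
  define y where "y = x \<circ> \<sigma>"
  have y_bounded: "norm (y k) \<le> M" for k unfolding y_def using bounded by simp
  have M: "M \<ge> 0" using bounded[of 0] norm_ge_zero[of "x 0"] by linarith
  define W where "W = {v. convergent (\<lambda>k. inner (y k) v)}"
  have "subspace W"
    unfolding subspace_def
  proof (intro conjI ballI allI)
    show "0 \<in> W" unfolding W_def by (simp add: convergent_const)
    show "u + w \<in> W" if "u \<in> W" "w \<in> W" for u w
      using that unfolding W_def by (simp add: inner_add_right convergent_add)
    show "c *\<^sub>R u \<in> W" if "u \<in> W" for c u
      using convergent_mult[OF convergent_const[of c] that[unfolded W_def mem_Collect_eq]]
      unfolding W_def by simp
  qed
  have "closed W" unfolding W_def by (rule closed_convergent_inner[of y M, OF y_bounded])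
  have yW: "y k \<in> W" for k unfolding W_def y_def using \<sigma>(2) by simp
  have convergent: "convergent (\<lambda>k. inner (y k) u)" for u
  proof -
    obtain q where q: "q \<in> W" "\<And>w. w \<in> W \<Longrightarrow> inner (u - q) w = 0"
      using orthogonal_projection_closed_subspace[OF \<open>subspace W\<close> \<open>closed W\<close>, of u] by blast
    have "inner (y k) u = inner (y k) q" for k
    proof -
      have "inner u (y k) = inner q (y k)" using q(2)[OF yW[of k]] by (simp add: inner_diff_left)
      then show ?thesis by (simp add: inner_commute)
    qed
    then show ?thesis using q(1) unfolding W_def by simp
  qed
  define L where "L u = lim (\<lambda>k. inner (y k) u)" for u
  have L: "(\<lambda>k. inner (y k) u) \<longlonglongrightarrow> L u" for u
    unfolding L_def using convergent convergent_LIMSEQ_iff by blast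
  obtain z where z: "\<And>w. L w = inner z w"
  proof (rule riesz_representation_closed_subspace[of UNIV L M])
    show "subspace (UNIV :: 'a set)" "closed (UNIV :: 'a set)" by simp_all
    show "L (u + w) = L u + L w" for u w
      using L[of "u + w"] tendsto_add[OF L[of u] L[of w]] by (simp add: inner_add_right LIMSEQ_unique)
    show "L (c *\<^sub>R u) = c * L u" for c u
      using L[of "c *\<^sub>R u"] tendsto_mult_left[OF L[of u], of c] by (simp add: LIMSEQ_unique)
    show "\<bar>L u\<bar> \<le> M * norm u" for u
    proof (rule LIMSEQ_le_const2[OF tendsto_rabs[OF L[of u]]])
      have "\<bar>inner (y k) u\<bar> \<le> M * norm u" for k
        using Cauchy_Schwarz_ineq2[of "y k" u] mult_right_mono[OF y_bounded[of k] norm_ge_zero[of u]]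
        by linarith
      then show "\<exists>N. \<forall>k\<ge>N. \<bar>inner (y k) u\<bar> \<le> M * norm u" by blast
    qed
  qed (use M that in simp_all)
  have "weakly_converges y z" unfolding weakly_converges_def using L z by simp
  then show ?thesis using \<sigma>(1) that unfolding y_def by blast
qed

section \<open>Convergence of contractive and averaged iterations\<close>

lemma contraction_iterates_dist:
  fixes T :: "'a::real_normed_vector \<Rightarrow> 'a"
  assumes lipschitz: "\<And>x y. norm (T x - T y) \<le> \<delta> * norm (x - y)" and "0 \<le> \<delta>" and "T p = p"
  shows "norm ((T ^^ n) x - p) \<le> \<delta> ^ n * norm (x - p)"
proof (induction n)
  case (Suc n)
  have "norm ((T ^^ Suc n) x - p) \<le> \<delta> * norm ((T ^^ n) x - p)"
    using lipschitz[of "(T ^^ n) x" p] \<open>T p = p\<close> by simp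
  also have "\<dots> \<le> \<delta> * (\<delta> ^ n * norm (x - p))" using Suc \<open>0 \<le> \<delta>\<close> by (rule mult_left_mono)
  finally show ?case by simp
qed simp

lemma contraction_iterates_tendsto:
  fixes T :: "'a::real_normed_vector \<Rightarrow> 'a"
  assumes "\<And>x y. norm (T x - T y) \<le> \<delta> * norm (x - y)" and "0 \<le> \<delta>" "\<delta> < 1" and "T p = p"
  shows "(\<lambda>n. (T ^^ n) x) \<longlonglongrightarrow> p"
proof -
  have "(\<lambda>n. \<delta> ^ n * norm (x - p)) \<longlonglongrightarrow> 0 * norm (x - p)"
    using \<open>0 \<le> \<delta>\<close> \<open>\<delta> < 1\<close> by (intro tendsto_mult_right LIMSEQ_power_zero) simp
  then have bound: "(\<lambda>n. \<delta> ^ n * norm (x - p)) \<longlonglongrightarrow> 0" by simp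
  have "(\<lambda>n. norm ((T ^^ n) x - p)) \<longlonglongrightarrow> 0"
  proof (rule tendsto_sandwich[OF _ _ tendsto_const bound])
    show "\<forall>\<^sub>F n in sequentially. 0 \<le> norm ((T ^^ n) x - p)" by simp
    show "\<forall>\<^sub>F n in sequentially. norm ((T ^^ n) x - p) \<le> \<delta> ^ n * norm (x - p)"
      using contraction_iterates_dist[OF assms(1,2,4)] by simp
  qed
  then show ?thesis by (simp add: LIM_zero_cancel tendsto_norm_zero_iff)
qed

lemma contraction_fixpoint_unique:
  fixes T :: "'a::real_normed_vector \<Rightarrow> 'a"
  assumes "\<And>x y. norm (T x - T y) \<le> \<delta> * norm (x - y)" and "\<delta> < 1" and "T p = p" "T q = q"
  shows "q = p"
proof -
  have "norm (q - p) \<le> \<delta> * norm (q - p)" using assms(1)[of q p] assms(3,4) by simp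
  then have "(1 - \<delta>) * norm (q - p) \<le> 0" by (simp add: algebra_simps)
  with \<open>\<delta> < 1\<close> show ?thesis by (simp add: mult_le_0_iff)
qed

lemma tendsto_imp_weakly_converges: "xs \<longlonglongrightarrow> z \<Longrightarrow> weakly_converges xs z"
  unfolding weakly_converges_def by (auto intro: tendsto_inner tendsto_const)

lemma nonexpansive_demiclosed:
  fixes T :: "'a::real_inner \<Rightarrow> 'a"
  assumes nonexpansive: "\<And>x y. norm (T x - T y) \<le> norm (x - y)"
    and weak: "weakly_converges u z" and bounded: "\<And>k. norm (u k - z) \<le> B"
    and residual: "(\<lambda>k. norm (u k - T (u k))) \<longlonglongrightarrow> 0"
  shows "T z = z"
proof -
  define d where "d k = norm (u k - T (u k))" for k
  have key: "(norm (z - T z))\<^sup>2 + 2 * inner (u k - z) (z - T z) \<le> (d k)\<^sup>2 + 2 * d k * B" for k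
  proof -
    have "norm (u k - T z) \<le> d k + norm (u k - z)"
      using norm_diff_triangle_ineq[of "u k" "T (u k)" "T (u k)" "T z"] nonexpansive[of "u k" z]
      unfolding d_def by simp
    then have "(norm (u k - T z))\<^sup>2 \<le> (d k + norm (u k - z))\<^sup>2"
      by (intro power_mono) auto
    also have "\<dots> \<le> (d k)\<^sup>2 + 2 * d k * B + (norm (u k - z))\<^sup>2"
      using bounded[of k] mult_left_mono[OF bounded[of k], of "2 * d k"]
      by (simp add: d_def power2_eq_square algebra_simps)
    finally show ?thesis
      using scaled_norm_square_expansion[where c=2 and x="u k - z" and y="u k - T z"]
      by (simp add: algebra_simps)
  qed
  have "(\<lambda>k. (norm (z - T z))\<^sup>2 + 2 * inner (u k - z) (z - T z)) \<longlonglongrightarrow> (norm (z - T z))\<^sup>2 + 2 * 0"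
  proof (intro tendsto_intros)
    have "(\<lambda>k. inner (u k) (z - T z) - inner z (z - T z)) \<longlonglongrightarrow> inner z (z - T z) - inner z (z - T z)"
      using weak unfolding weakly_converges_def by (intro tendsto_diff tendsto_const) blast
    then show "(\<lambda>k. inner (u k - z) (z - T z)) \<longlonglongrightarrow> 0" by (simp add: inner_diff_left)
  qed
  moreover have "(\<lambda>k. (d k)\<^sup>2 + 2 * d k * B) \<longlonglongrightarrow> 0\<^sup>2 + 2 * 0 * B"
    using residual unfolding d_def[symmetric] by (intro tendsto_intros)
  ultimately have "(norm (z - T z))\<^sup>2 + 2 * 0 \<le> 0\<^sup>2 + 2 * 0 * B"
    using key by (intro LIMSEQ_le) auto
  then show ?thesis by simp
qed

text \<open>Opial's argument: if \<open>\<parallel>xs n - p\<parallel>\<close> converges for both weak cluster points \<open>p\<close>, then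
  \<open>\<langle>xs n, z1 - z2\<rangle>\<close> converges, and its limit equals both \<open>\<langle>z1, z1 - z2\<rangle>\<close> and \<open>\<langle>z2, z1 - z2\<rangle>\<close>.\<close>

lemma weak_cluster_point_unique:
  fixes xs :: "nat \<Rightarrow> 'a::real_inner"
  assumes dist_convergent: "\<And>p. p \<in> F \<Longrightarrow> convergent (\<lambda>n. norm (xs n - p))"
    and "z1 \<in> F" "z2 \<in> F"
    and "strict_mono \<sigma>1" "weakly_converges (xs \<circ> \<sigma>1) z1"
    and "strict_mono \<sigma>2" "weakly_converges (xs \<circ> \<sigma>2) z2"
  shows "z1 = z2"
proof -
  define g where "g n = inner (xs n) (z1 - z2)" for n
  have g_eq: "g n = ((norm (xs n - z2))\<^sup>2 - (norm (xs n - z1))\<^sup>2 + (norm z1)\<^sup>2 - (norm z2)\<^sup>2) / 2" for n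
    unfolding g_def power2_norm_eq_inner
    by (simp add: inner_diff_left inner_diff_right inner_commute field_simps)
  have sq: "(\<lambda>n. (norm (xs n - p))\<^sup>2) \<longlonglongrightarrow> (lim (\<lambda>n. norm (xs n - p)))\<^sup>2" if "p \<in> F" for p
    using dist_convergent[OF that] by (intro tendsto_power) (simp add: convergent_LIMSEQ_iff)
  have "g \<longlonglongrightarrow> ((lim (\<lambda>n. norm (xs n - z2)))\<^sup>2 - (lim (\<lambda>n. norm (xs n - z1)))\<^sup>2
      + (norm z1)\<^sup>2 - (norm z2)\<^sup>2) / 2"
    unfolding g_eq by (intro tendsto_intros sq \<open>z1 \<in> F\<close> \<open>z2 \<in> F\<close>) simp
  then obtain l where l: "g \<longlonglongrightarrow> l" by blast
  have cluster: "l = inner z (z1 - z2)" if "strict_mono \<sigma>" "weakly_converges (xs \<circ> \<sigma>) z" for \<sigma> z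
  proof (rule LIMSEQ_unique)
    show "(g \<circ> \<sigma>) \<longlonglongrightarrow> l" using LIMSEQ_subseq_LIMSEQ[OF l that(1)] .
    show "(g \<circ> \<sigma>) \<longlonglongrightarrow> inner z (z1 - z2)"
      using that(2) unfolding weakly_converges_def g_def by (simp add: o_def)
  qed
  from cluster[OF assms(4,5)] cluster[OF assms(6,7)] have "inner (z1 - z2) (z1 - z2) = 0"
    by (simp add: inner_diff_left)
  then show ?thesis by simp
qed

lemma weakly_converges_if_unique_cluster_point:
  fixes xs :: "nat \<Rightarrow> 'a::{real_inner,complete_space}"
  assumes bounded: "\<And>n. norm (xs n) \<le> R"
    and unique: "\<And>\<sigma> z'. strict_mono \<sigma> \<Longrightarrow> weakly_converges (xs \<circ> \<sigma>) z' \<Longrightarrow> z' = z"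
  shows "weakly_converges xs z"
  unfolding weakly_converges_def
proof (rule allI, rule ccontr)
  fix w assume "\<not> (\<lambda>n. inner (xs n) w) \<longlonglongrightarrow> inner z w"
  then obtain e where "e > 0" and far: "\<forall>N. \<exists>n\<ge>N. \<not> norm (inner (xs n) w - inner z w) < e"
    unfolding LIMSEQ_iff by blast
  define S where "S = {n. e \<le> \<bar>inner (xs n) w - inner z w\<bar>}"
  have "infinite S" unfolding infinite_nat_iff_unbounded_le S_def using far by fastforce
  then obtain \<rho> :: "nat \<Rightarrow> nat" where \<rho>: "strict_mono \<rho>" "\<And>n. \<rho> n \<in> S"
    using infinite_enumerate by blast
  obtain \<sigma> z' where \<sigma>: "strict_mono \<sigma>" "weakly_converges ((xs \<circ> \<rho>) \<circ> \<sigma>) z'"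
    using bounded_seq_weakly_convergent_subseq[of "xs \<circ> \<rho>" R] bounded by auto
  have "z' = z" using unique[of "\<rho> \<circ> \<sigma>" z'] strict_mono_o[OF \<rho>(1) \<sigma>(1)] \<sigma>(2) by (simp add: o_assoc)
  then have "(\<lambda>k. inner (xs (\<rho> (\<sigma> k))) w) \<longlonglongrightarrow> inner z w"
    using \<sigma>(2) unfolding weakly_converges_def by simp
  with \<open>e > 0\<close> obtain k where "norm (inner (xs (\<rho> (\<sigma> k))) w - inner z w) < e"
    unfolding LIMSEQ_iff by blast
  with \<rho>(2)[of "\<sigma> k"] show False unfolding S_def by simp
qed

lemma averaged_iterates_asymptotically_regular:
  fixes T :: "'a::real_normed_vector \<Rightarrow> 'a"
  assumes averaged: "\<And>x. (norm (T x - p))\<^sup>2 \<le> (norm (x - p))\<^sup>2 - c * (norm (x - T x))\<^sup>2"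
    and "c > 0"
  shows "(\<lambda>n. norm ((T ^^ n) x0 - T ((T ^^ n) x0))) \<longlonglongrightarrow> 0"
proof -
  define xs where "xs n = (T ^^ n) x0" for n
  define a where "a n = (norm (xs n - p))\<^sup>2" for n
  have decrease: "c * (norm (xs n - T (xs n)))\<^sup>2 \<le> a n - a (Suc n)" for n
    using averaged[of "xs n"] unfolding a_def xs_def by simp
  have "decseq a"
  proof (rule decseq_SucI)
    show "a (Suc n) \<le> a n" for n
      using decrease[of n] mult_nonneg_nonneg[OF less_imp_le[OF \<open>c > 0\<close>] zero_le_power2[of "norm (xs n - T (xs n))"]]
      by linarith
  qed
  moreover have "\<forall>n. 0 \<le> a n" unfolding a_def by simp
  ultimately obtain A where a: "a \<longlonglongrightarrow> A" by (rule decseq_convergent)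
  have "(\<lambda>n. (a n - a (Suc n)) / c) \<longlonglongrightarrow> (A - A) / c"
    by (intro tendsto_divide tendsto_diff a LIMSEQ_Suc[OF a] tendsto_const) (use \<open>c > 0\<close> in simp)
  then have lim0: "(\<lambda>n. (a n - a (Suc n)) / c) \<longlonglongrightarrow> 0" by simp
  have "(norm (xs n - T (xs n)))\<^sup>2 \<le> (a n - a (Suc n)) / c" for n
    using decrease[of n] \<open>c > 0\<close> by (simp add: pos_le_divide_eq mult.commute)
  then have "(\<lambda>n. (norm (xs n - T (xs n)))\<^sup>2) \<longlonglongrightarrow> 0"
    by (intro tendsto_sandwich[OF _ _ tendsto_const lim0]) simp_all
  then have "(\<lambda>n. sqrt ((norm (xs n - T (xs n)))\<^sup>2)) \<longlonglongrightarrow> sqrt 0"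
    by (rule tendsto_real_sqrt)
  then show ?thesis unfolding xs_def by simp
qed

lemma iterates_weakly_converge_to_fixpoint:
  fixes T :: "'a::{real_inner,complete_space} \<Rightarrow> 'a"
  assumes nonexpansive: "\<And>x y. norm (T x - T y) \<le> norm (x - y)"
    and p0: "T p0 = p0"
    and averaged: "\<And>x p. T p = p \<Longrightarrow> (norm (T x - p))\<^sup>2 \<le> (norm (x - p))\<^sup>2 - c * (norm (x - T x))\<^sup>2"
    and "c > 0"
  obtains z where "T z = z" "weakly_converges (\<lambda>n. (T ^^ n) x0) z"
proof -
  define xs where "xs n = (T ^^ n) x0" for n
  have xs_Suc: "xs (Suc n) = T (xs n)" for n unfolding xs_def by simp
  have fejer: "norm (xs (Suc n) - p) \<le> norm (xs n - p)" if "T p = p" for p n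
    using nonexpansive[of "xs n" p] that by (simp add: xs_Suc)
  have fejer_bound: "norm (xs n - p) \<le> norm (x0 - p)" if "T p = p" for p n
  proof (induction n)
    case (Suc n) then show ?case using fejer[OF that, of n] by linarith
  qed (simp add: xs_def)
  have dist_convergent: "convergent (\<lambda>n. norm (xs n - p))" if "T p = p" for p
  proof (rule Bseq_monoseq_convergent)
    show "Bseq (\<lambda>n. norm (xs n - p))"
      using fejer_bound[OF that] by (intro BseqI'[of _ "norm (x0 - p)"]) auto
    show "monoseq (\<lambda>n. norm (xs n - p))"
      by (rule decseq_imp_monoseq, rule decseq_SucI, rule fejer[OF that])
  qed
  have residual: "(\<lambda>n. norm (xs n - T (xs n))) \<longlonglongrightarrow> 0"
    unfolding xs_def by (rule averaged_iterates_asymptotically_regular[OF averaged[OF p0] \<open>c > 0\<close>])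
  define R where "R = norm (x0 - p0) + norm p0"
  have bounded: "norm (xs n) \<le> R" for n
    using norm_triangle_ineq[of "xs n - p0" p0] fejer_bound[OF p0, of n] unfolding R_def by simp
  have cluster_fixed: "T z = z" if \<sigma>: "strict_mono \<sigma>" "weakly_converges (xs \<circ> \<sigma>) z" for \<sigma> z
  proof (rule nonexpansive_demiclosed[OF nonexpansive \<sigma>(2)])
    show "norm ((xs \<circ> \<sigma>) k - z) \<le> R + norm z" for k
      using norm_triangle_ineq4[of "xs (\<sigma> k)" z] bounded[of "\<sigma> k"] by simp
    show "(\<lambda>k. norm ((xs \<circ> \<sigma>) k - T ((xs \<circ> \<sigma>) k))) \<longlonglongrightarrow> 0"
      using LIMSEQ_subseq_LIMSEQ[OF residual \<sigma>(1)] by (simp add: o_def)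
  qed
  obtain \<sigma> z where \<sigma>: "strict_mono \<sigma>" "weakly_converges (xs \<circ> \<sigma>) z"
    using bounded_seq_weakly_convergent_subseq[of xs R, OF bounded] by blast
  have "weakly_converges xs z"
  proof (rule weakly_converges_if_unique_cluster_point[of xs R, OF bounded])
    fix \<sigma>' z' assume \<sigma>': "strict_mono \<sigma>'" "weakly_converges (xs \<circ> \<sigma>') z'"
    show "z' = z"
      by (rule weak_cluster_point_unique[where F = "{p. T p = p}", OF _ _ _ \<sigma>' \<sigma>])
        (use dist_convergent cluster_fixed[OF \<sigma>'] cluster_fixed[OF \<sigma>] in auto)
  qed
  with cluster_fixed[OF \<sigma>] show ?thesis unfolding xs_def by (rule that)
qed

section \<open>The forward-backward operator\<close>

lemma norm_add_square_le:
  fixes u w :: "'a::real_inner"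
  shows "(norm (u + w))\<^sup>2 \<le> 2 * (norm u)\<^sup>2 + 2 * (norm w)\<^sup>2"
proof -
  have "(norm (u + w))\<^sup>2 + (norm (u - w))\<^sup>2 = 2 * (norm u)\<^sup>2 + 2 * (norm w)\<^sup>2"
    unfolding power2_norm_eq_inner
    by (simp add: inner_add_left inner_add_right inner_diff_left inner_diff_right inner_commute)
  then show ?thesis using zero_le_power2[of "norm (u - w)"] by linarith
qed

lemma forward_step_cocoercive:
  fixes H :: "'a::real_inner \<Rightarrow> 'a"
  assumes cocoercive: "\<And>x y. (norm (H x - H y))\<^sup>2 \<le> \<beta> * inner (H x - H y) (x - y)"
    and "\<beta> > 0" and "s \<ge> 0"
  shows "(norm ((x - s *\<^sub>R H x) - (y - s *\<^sub>R H y)))\<^sup>2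
       \<le> (norm (x - y))\<^sup>2 - (2 * s / \<beta> - s\<^sup>2) * (norm (H x - H y))\<^sup>2"
proof -
  have "(x - s *\<^sub>R H x) - (y - s *\<^sub>R H y) = (x - y) - s *\<^sub>R (H x - H y)"
    by (simp add: algebra_simps)
  then have expand: "(norm ((x - s *\<^sub>R H x) - (y - s *\<^sub>R H y)))\<^sup>2
      = (norm (x - y))\<^sup>2 - 2 * s * inner (H x - H y) (x - y) + s\<^sup>2 * (norm (H x - H y))\<^sup>2"
    unfolding power2_norm_eq_inner
    by (simp add: inner_diff_left inner_diff_right inner_commute power2_eq_square algebra_simps)
  have "2 * s * ((norm (H x - H y))\<^sup>2 / \<beta>) \<le> 2 * s * inner (H x - H y) (x - y)"
    using cocoercive[of x y] \<open>\<beta> > 0\<close> \<open>s \<ge> 0\<close> by (intro mult_left_mono) (auto simp: field_simps)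
  then show ?thesis unfolding expand by (simp add: algebra_simps)
qed

text \<open>The residual \<open>x - P (x - s H x)\<close> splits into \<open>s (H x - H p)\<close>, controlled by cocoercivity, and the
  defect of firm nonexpansiveness.\<close>

lemma firmly_nonexpansive_forward_step_averaged:
  fixes P H :: "'a::real_inner \<Rightarrow> 'a"
  assumes firm: "\<And>a b. (norm (P a - P b))\<^sup>2 \<le> inner (a - b) (P a - P b)"
    and forward: "\<And>x y. (norm ((x - s *\<^sub>R H x) - (y - s *\<^sub>R H y)))\<^sup>2
                    \<le> (norm (x - y))\<^sup>2 - \<kappa> * (norm (H x - H y))\<^sup>2"
    and "\<kappa> > 0" and "s > 0" and fixed: "P (p - s *\<^sub>R H p) = p"
  shows "(norm (P (x - s *\<^sub>R H x) - p))\<^sup>2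
       \<le> (norm (x - p))\<^sup>2 - min (\<kappa> / (2 * s\<^sup>2)) (1/2) * (norm (x - P (x - s *\<^sub>R H x)))\<^sup>2"
proof -
  define a where "a = x - s *\<^sub>R H x"
  define b where "b = p - s *\<^sub>R H p"
  define q where "q = P a"
  define e where "e = (a - q) - (b - p)"
  define d where "d = H x - H p"
  define c where "c = min (\<kappa> / (2 * s\<^sup>2)) (1/2)"
  have "(norm (q - p))\<^sup>2 \<le> inner (a - b) (q - p)"
    using firm[of a b] fixed unfolding q_def b_def by simp
  moreover have "(norm e)\<^sup>2 = (norm (a - b))\<^sup>2 - 2 * inner (a - b) (q - p) + (norm (q - p))\<^sup>2"
    unfolding e_def power2_norm_eq_inner
    by (simp add: inner_diff_left inner_diff_right inner_commute algebra_simps)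
  moreover have "(norm (a - b))\<^sup>2 \<le> (norm (x - p))\<^sup>2 - \<kappa> * (norm d)\<^sup>2"
    unfolding a_def b_def d_def by (rule forward)
  moreover have "c * (norm (x - q))\<^sup>2 \<le> \<kappa> * (norm d)\<^sup>2 + (norm e)\<^sup>2"
  proof -
    have "x - q = s *\<^sub>R d + e"
      unfolding e_def d_def a_def b_def by (simp add: algebra_simps)
    then have "(norm (x - q))\<^sup>2 \<le> 2 * s\<^sup>2 * (norm d)\<^sup>2 + 2 * (norm e)\<^sup>2"
      using norm_add_square_le[of "s *\<^sub>R d" e] by (simp add: power_mult_distrib)
    moreover have "c * (2 * s\<^sup>2) \<le> \<kappa>" "c * 2 \<le> 1"
      unfolding c_def using \<open>s > 0\<close> by (auto simp: min_def field_simps)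
    moreover have "c \<ge> 0" unfolding c_def using \<open>\<kappa> > 0\<close> by simp
    ultimately show ?thesis
      using mult_right_mono[OF \<open>c * (2 * s\<^sup>2) \<le> \<kappa>\<close> zero_le_power2[of "norm d"]]
        mult_right_mono[OF \<open>c * 2 \<le> 1\<close> zero_le_power2[of "norm e"]]
        mult_left_mono[OF \<open>(norm (x - q))\<^sup>2 \<le> _\<close> \<open>c \<ge> 0\<close>]
      by (simp add: algebra_simps)
  qed
  ultimately show ?thesis unfolding q_def a_def c_def by linarith
qed

locale forward_backward =
  fixes f :: "'a::{real_inner, complete_space} \<Rightarrow> real"
    and gradf :: "'a \<Rightarrow> 'a"
    and g :: "'a \<Rightarrow> ereal"
    and \<mu> \<omega> \<beta> \<gamma> :: real
  assumes omega_le_mu: "\<omega> \<le> \<mu>" and omega_nonneg: "0 \<le> \<omega>" and beta_pos: "0 < \<beta>"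
    and f_strongly_convex: "strongly_convex \<mu> f"
    and f_gradient: "\<And>x. (f has_derivative (\<lambda>h. inner (gradf x) h)) (at x)"
    and gradf_lipschitz: "\<beta>-lipschitz_on UNIV gradf"
    and g_proper: "proper_fun g" and g_lsc: "lsc_fun g" and g_hypoconvex: "hypoconvex \<omega> g"
    and gamma_pos: "0 < \<gamma>" and gamma_less: "\<gamma> < 2 / (\<beta> + 2 * \<mu>)"
begin

definition T :: "'a \<Rightarrow> 'a" where
  "T = (\<lambda>x. prox \<gamma> g (x - \<gamma> *\<^sub>R gradf x))"

definition \<delta> :: real where
  "\<delta> = (1 - \<gamma> * \<mu>) / (1 - \<gamma> * \<omega>)"

text \<open>Completing the square (\<open>argmin_prox_penalty_hypoconvex_shift\<close>) rewrites \<open>T x\<close> as the prox,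
  with step \<open>\<tau>\<close>, of the convex function \<open>g\<^sub>\<omega>\<close> at the point \<open>v x = \<delta> (x - s (\<nabla>f x - \<mu> x))\<close>.\<close>

definition g\<^sub>\<omega> :: "'a \<Rightarrow> ereal" where
  "g\<^sub>\<omega> x = g x + ereal (\<omega>/2 * (norm x)\<^sup>2)"

definition \<tau> :: real where
  "\<tau> = \<gamma> / (1 - \<gamma> * \<omega>)"

definition s :: real where
  "s = \<gamma> / (1 - \<gamma> * \<mu>)"

definition H :: "'a \<Rightarrow> 'a" where
  "H x = gradf x - \<mu> *\<^sub>R x"

definition v :: "'a \<Rightarrow> 'a" where
  "v x = (1 / (1 - \<gamma> * \<omega>)) *\<^sub>R (x - \<gamma> *\<^sub>R gradf x)"

lemma mu_nonneg: "0 \<le> \<mu>"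
  using omega_le_mu omega_nonneg by linarith

lemma gamma_beta_less: "\<gamma> * \<beta> + 2 * (\<gamma> * \<mu>) < 2"
proof -
  have "\<gamma> * (\<beta> + 2 * \<mu>) < 2"
    using gamma_less gamma_pos beta_pos mu_nonneg by (simp add: field_simps)
  then show ?thesis by (simp add: algebra_simps)
qed

lemma gamma_mu_less_one: "\<gamma> * \<mu> < 1"
  using gamma_beta_less mult_pos_pos[OF gamma_pos beta_pos] by linarith

lemma gamma_omega_less_one: "\<gamma> * \<omega> < 1"
  using gamma_mu_less_one mult_left_mono[OF omega_le_mu less_imp_le[OF gamma_pos]] by linarith

lemma tau_pos: "0 < \<tau>"
  unfolding \<tau>_def using gamma_pos gamma_omega_less_one by simp

lemma s_pos: "0 < s"
  unfolding s_def using gamma_pos gamma_mu_less_one by simp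

lemma delta_pos: "0 < \<delta>"
  unfolding \<delta>_def using gamma_mu_less_one gamma_omega_less_one by simp

lemma delta_le_one: "\<delta> \<le> 1"
  unfolding \<delta>_def using gamma_omega_less_one mult_left_mono[OF omega_le_mu less_imp_le[OF gamma_pos]]
  by simp

lemma delta_less_one_iff: "\<delta> < 1 \<longleftrightarrow> \<omega> < \<mu>"
  unfolding \<delta>_def using gamma_omega_less_one gamma_pos by simp

lemma g\<^sub>\<omega>_convex: "ereal_convex g\<^sub>\<omega>"
  using g_hypoconvex unfolding hypoconvex_def g\<^sub>\<omega>_def[abs_def] .

lemma g\<^sub>\<omega>_lsc: "lsc_fun g\<^sub>\<omega>"
proof -
  have "\<And>x. g x \<noteq> -\<infinity>" using g_proper unfolding proper_fun_def by blast
  then show ?thesis unfolding g\<^sub>\<omega>_def[abs_def]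
    by (intro lsc_fun_add_continuous g_lsc continuous_intros)
qed

lemma g\<^sub>\<omega>_proper: "proper_fun g\<^sub>\<omega>"
  using g_proper unfolding proper_fun_def g\<^sub>\<omega>_def by auto

lemma T_eq_iff: "T x = p \<longleftrightarrow> p \<in> argmin_sum (prox_penalty \<tau> (v x)) g\<^sub>\<omega>"
  and T_eq_prox: "T x = prox \<tau> g\<^sub>\<omega> (v x)"
proof -
  have shift: "argmin_sum (prox_penalty \<gamma> u) g = argmin_sum (prox_penalty \<tau> ((1 / (1 - \<gamma> * \<omega>)) *\<^sub>R u)) g\<^sub>\<omega>"
    for u
    unfolding \<tau>_def g\<^sub>\<omega>_def[abs_def]
    by (rule argmin_prox_penalty_hypoconvex_shift[OF gamma_pos refl]) (use gamma_omega_less_one in simp)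
  have ex1: "\<exists>!p. p \<in> argmin_sum (prox_penalty \<tau> a) g\<^sub>\<omega>" for a
    by (rule argmin_prox_penalty_ex1[OF g\<^sub>\<omega>_convex g\<^sub>\<omega>_lsc g\<^sub>\<omega>_proper tau_pos])
  show iff: "T x = p \<longleftrightarrow> p \<in> argmin_sum (prox_penalty \<tau> (v x)) g\<^sub>\<omega>" for p
    using prox_eq_iff[of \<gamma> "x - \<gamma> *\<^sub>R gradf x" g p] ex1 unfolding T_def v_def shift by simp
  have "T x \<in> argmin_sum (prox_penalty \<tau> (v x)) g\<^sub>\<omega>" using iff by blast
  then show "T x = prox \<tau> g\<^sub>\<omega> (v x)" using prox_eq_iff[OF ex1, of "v x" "T x"] by simp
qed

lemma prox_g\<^sub>\<omega>_firmly_nonexpansive: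
  "(norm (prox \<tau> g\<^sub>\<omega> a - prox \<tau> g\<^sub>\<omega> b))\<^sup>2 \<le> inner (a - b) (prox \<tau> g\<^sub>\<omega> a - prox \<tau> g\<^sub>\<omega> b)"
proof -
  have "\<exists>!p. p \<in> argmin_sum (prox_penalty \<tau> c) g\<^sub>\<omega>" for c
    by (rule argmin_prox_penalty_ex1[OF g\<^sub>\<omega>_convex g\<^sub>\<omega>_lsc g\<^sub>\<omega>_proper tau_pos])
  then have "prox \<tau> g\<^sub>\<omega> c \<in> argmin_sum (prox_penalty \<tau> c) g\<^sub>\<omega>" for c
    using prox_eq_iff by blast
  from this[of a] this[of b] show ?thesis
    by (rule argmin_prox_penalty_firmly_nonexpansive[OF g\<^sub>\<omega>_convex g\<^sub>\<omega>_proper tau_pos])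
qed

lemma v_eq: "v x = \<delta> *\<^sub>R (x - s *\<^sub>R H x)"
proof -
  have cancel: "m / w * (\<gamma> / m) = \<gamma> / w" "m / w + m / w * (\<gamma> / m) * \<mu> = (m + \<gamma> * \<mu>) / w"
    if "m \<noteq> 0" "w \<noteq> 0" for m w :: real
    using that by (simp_all add: field_simps)
  have "1 - \<gamma> * \<mu> \<noteq> 0" "1 - \<gamma> * \<omega> \<noteq> 0"
    using gamma_mu_less_one gamma_omega_less_one by simp_all
  from cancel[OF this] have coeffs: "\<delta> * s = \<gamma> / (1 - \<gamma> * \<omega>)" "\<delta> + \<delta> * s * \<mu> = 1 / (1 - \<gamma> * \<omega>)"
    unfolding \<delta>_def s_def by simp_all
  have "\<delta> *\<^sub>R (x - s *\<^sub>R H x) = (\<delta> + \<delta> * s * \<mu>) *\<^sub>R x - (\<delta> * s) *\<^sub>R gradf x"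
    unfolding H_def by (simp add: algebra_simps)
  also have "\<dots> = v x" unfolding coeffs(2) unfolding coeffs(1) v_def by (simp add: algebra_simps)
  finally show ?thesis ..
qed

lemma H_cocoercive: "(norm (H x - H y))\<^sup>2 \<le> \<beta> * inner (H x - H y) (x - y)"
  unfolding H_def
  by (rule strongly_convex_cocoercive[OF f_strongly_convex f_gradient gradf_lipschitz mu_nonneg beta_pos])

lemma forward_step_H:
  "(norm ((x - s *\<^sub>R H x) - (y - s *\<^sub>R H y)))\<^sup>2 \<le> (norm (x - y))\<^sup>2 - (2 * s / \<beta> - s\<^sup>2) * (norm (H x - H y))\<^sup>2"
  by (rule forward_step_cocoercive[of H \<beta> s, OF H_cocoercive beta_pos less_imp_le[OF s_pos]])

lemma forward_step_margin_pos: "0 < 2 * s / \<beta> - s\<^sup>2"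
proof -
  have "\<gamma> * \<beta> < 2 * (1 - \<gamma> * \<mu>)" using gamma_beta_less by (simp add: algebra_simps)
  then have "s * \<beta> < 2"
    unfolding s_def using gamma_mu_less_one by (simp add: pos_divide_less_eq)
  then have "s * s < s * (2 / \<beta>)" using s_pos beta_pos by (simp add: pos_less_divide_eq)
  then show ?thesis by (simp add: power2_eq_square mult.commute)
qed

lemma T_lipschitz: "norm (T x - T y) \<le> \<delta> * norm (x - y)"
proof -
  have "(norm (T x - T y))\<^sup>2 \<le> inner (v x - v y) (T x - T y)"
    unfolding T_eq_prox by (rule prox_g\<^sub>\<omega>_firmly_nonexpansive)
  also have "\<dots> \<le> norm (v x - v y) * norm (T x - T y)" by (rule norm_cauchy_schwarz)
  finally have le: "norm (T x - T y) * norm (T x - T y) \<le> norm (v x - v y) * norm (T x - T y)"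
    by (simp add: power2_eq_square)
  have "norm (T x - T y) \<le> norm (v x - v y)"
  proof (cases "norm (T x - T y) = 0")
    case False then show ?thesis using le by (simp add: mult_le_cancel_right)
  qed simp
  also have "norm (v x - v y) = \<delta> * norm ((x - s *\<^sub>R H x) - (y - s *\<^sub>R H y))"
    unfolding v_eq using delta_pos by (simp add: scaleR_diff_right[symmetric])
  also have "\<dots> \<le> \<delta> * norm (x - y)"
  proof -
    have "0 \<le> (2 * s / \<beta> - s\<^sup>2) * (norm (H x - H y))\<^sup>2"
      using forward_step_margin_pos by simp
    then have "(norm ((x - s *\<^sub>R H x) - (y - s *\<^sub>R H y)))\<^sup>2 \<le> (norm (x - y))\<^sup>2"
      using forward_step_H[of x y] by linarith
    then have "norm ((x - s *\<^sub>R H x) - (y - s *\<^sub>R H y)) \<le> norm (x - y)"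
      by (rule power2_le_imp_le) simp
    then show ?thesis using delta_pos by (simp add: mult_left_mono)
  qed
  finally show ?thesis .
qed

lemma T_averaged:
  assumes "\<omega> = \<mu>" and "T p = p"
  shows "(norm (T x - p))\<^sup>2
       \<le> (norm (x - p))\<^sup>2 - min ((2 * s / \<beta> - s\<^sup>2) / (2 * s\<^sup>2)) (1/2) * (norm (x - T x))\<^sup>2"
proof -
  have "\<delta> = 1" unfolding \<delta>_def using \<open>\<omega> = \<mu>\<close> gamma_omega_less_one by simp
  then have T_forward: "T y = prox \<tau> g\<^sub>\<omega> (y - s *\<^sub>R H y)" for y
    unfolding T_eq_prox v_eq by simp
  show ?thesis
    unfolding T_forward
    by (rule firmly_nonexpansive_forward_step_averaged[OF prox_g\<^sub>\<omega>_firmly_nonexpansive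
          forward_step_H forward_step_margin_pos s_pos])
      (use \<open>T p = p\<close> T_forward[of p] in simp)
qed

lemma fixpoint_iff_argmin: "T x = x \<longleftrightarrow> x \<in> argmin_sum f g"
proof -
  define F where "F y = f y - \<omega>/2 * (norm y)\<^sup>2" for y
  define G where "G = gradf x - \<omega> *\<^sub>R x"
  have argmin_eq: "argmin_sum f g = argmin_sum F g\<^sub>\<omega>"
  proof (rule argmin_sum_cong_shift[where K = 0])
    show "ereal (f y) + g y = ereal (F y) + g\<^sub>\<omega> y + ereal 0" for y
      unfolding F_def g\<^sub>\<omega>_def by (cases "g y") simp_all
  qed
  have lower: "F x + inner G (y - x) \<le> F y" for y
  proof -
    have "0 \<le> (\<mu> - \<omega>)/2 * (norm (y - x))\<^sup>2" using omega_le_mu by simp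
    then show ?thesis
      using strongly_convex_gradient_inequality[OF f_strongly_convex f_gradient, of x y]
        scaled_norm_square_expansion[where c=\<omega> and x=x and y=y]
      unfolding F_def G_def by (simp add: inner_diff_left algebra_simps)
  qed
  have upper: "F y \<le> F x + inner G (y - x) + \<beta>/2 * (norm (y - x))\<^sup>2" for y
  proof -
    have "0 \<le> \<omega>/2 * (norm (y - x))\<^sup>2" using omega_nonneg by simp
    then show ?thesis
      using descent_lemma[OF f_gradient gradf_lipschitz, of y x]
        scaled_norm_square_expansion[where c=\<omega> and x=x and y=y]
      unfolding F_def G_def by (simp add: inner_diff_left algebra_simps)
  qed
  have step: "inner (v x - x) (y - x) / \<tau> = - inner G (y - x)" for y
  proof -
    have coeff: "1 / (1 - \<gamma> * \<omega>) - 1 = \<gamma> / (1 - \<gamma> * \<omega>) * \<omega>"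
      using gamma_omega_less_one by (simp add: field_simps)
    have "v x - x = (1 / (1 - \<gamma> * \<omega>) - 1) *\<^sub>R x - (\<gamma> / (1 - \<gamma> * \<omega>)) *\<^sub>R gradf x"
      unfolding v_def by (simp add: algebra_simps)
    also have "\<dots> = \<tau> *\<^sub>R (\<omega> *\<^sub>R x - gradf x)"
      unfolding coeff \<tau>_def by (simp add: algebra_simps)
    finally have "v x - x = \<tau> *\<^sub>R (\<omega> *\<^sub>R x - gradf x)" .
    then show ?thesis unfolding G_def using tau_pos by (simp add: inner_diff_left)
  qed
  have g\<^sub>\<omega>_ninf: "g\<^sub>\<omega> y \<noteq> -\<infinity>" for y using g\<^sub>\<omega>_proper unfolding proper_fun_def by blast
  show ?thesis
  proof (cases "g\<^sub>\<omega> x")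
    case (real a)
    have "T x = x \<longleftrightarrow> x \<in> argmin_sum (prox_penalty \<tau> (v x)) g\<^sub>\<omega>" by (rule T_eq_iff)
    also have "\<dots> \<longleftrightarrow> (\<forall>y b. g\<^sub>\<omega> y = ereal b \<longrightarrow> - inner G (y - x) \<le> b - a)"
      using argmin_prox_penalty_iff[OF g\<^sub>\<omega>_convex g\<^sub>\<omega>_ninf real tau_pos] step by simp
    also have "\<dots> \<longleftrightarrow> x \<in> argmin_sum F g\<^sub>\<omega>"
      using argmin_sum_iff_variational_inequality[OF lower upper g\<^sub>\<omega>_convex g\<^sub>\<omega>_ninf real] by simp
    finally show ?thesis unfolding argmin_eq .
  next
    case PInf
    have "x \<notin> argmin_sum F' g\<^sub>\<omega>" for F' :: "'a \<Rightarrow> real"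
    proof
      assume "x \<in> argmin_sum F' g\<^sub>\<omega>"
      then obtain a where "g\<^sub>\<omega> x = ereal a" by (rule argmin_sum_finite[OF g\<^sub>\<omega>_proper])
      with PInf show False by simp
    qed
    then show ?thesis unfolding argmin_eq T_eq_iff by blast
  qed (use g\<^sub>\<omega>_ninf in simp)
qed

lemma fixpoints_T: "fixpoints T = argmin_sum f g"
  unfolding fixpoints_def using fixpoint_iff_argmin by blast

lemma iterates_linear_convergence:
  assumes "\<omega> < \<mu>" and p: "p \<in> argmin_sum f g"
  shows "argmin_sum f g = {p}" and "\<delta> < 1"
    and "(\<lambda>n. (T ^^ n) x0) \<longlonglongrightarrow> p" and "norm ((T ^^ n) x0 - p) \<le> \<delta> ^ n * norm (x0 - p)"
proof -
  show "\<delta> < 1" using \<open>\<omega> < \<mu>\<close> by (simp add: delta_less_one_iff)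
  have lipschitz: "norm (T x - T y) \<le> \<delta> * norm (x - y)" for x y by (rule T_lipschitz)
  have "T p = p" using p by (simp add: fixpoint_iff_argmin)
  show "argmin_sum f g = {p}"
  proof (intro equalityI subsetI)
    fix q assume "q \<in> argmin_sum f g"
    then have "T q = q" by (simp add: fixpoint_iff_argmin)
    with contraction_fixpoint_unique[OF lipschitz \<open>\<delta> < 1\<close> \<open>T p = p\<close>] show "q \<in> {p}" by simp
  qed (simp add: p)
  show "(\<lambda>n. (T ^^ n) x0) \<longlonglongrightarrow> p"
    by (rule contraction_iterates_tendsto[OF lipschitz less_imp_le[OF delta_pos] \<open>\<delta> < 1\<close> \<open>T p = p\<close>])
  show "norm ((T ^^ n) x0 - p) \<le> \<delta> ^ n * norm (x0 - p)"
    by (rule contraction_iterates_dist[OF lipschitz less_imp_le[OF delta_pos] \<open>T p = p\<close>])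
qed

lemma iterates_weak_convergence:
  assumes "\<omega> = \<mu>" and p: "p \<in> argmin_sum f g"
  obtains z where "z \<in> argmin_sum f g" "weakly_converges (\<lambda>n. (T ^^ n) x0) z"
proof -
  have "T p = p" using p by (simp add: fixpoint_iff_argmin)
  have nonexpansive: "norm (T x - T y) \<le> norm (x - y)" for x y
    using T_lipschitz[of x y] mult_right_mono[OF delta_le_one norm_ge_zero[of "x - y"]] by linarith
  have "0 < min ((2 * s / \<beta> - s\<^sup>2) / (2 * s\<^sup>2)) (1/2)"
    using forward_step_margin_pos s_pos by simp
  from iterates_weakly_converge_to_fixpoint[OF nonexpansive \<open>T p = p\<close> T_averaged[OF \<open>\<omega> = \<mu>\<close>] this]
  obtain z where "T z = z" "weakly_converges (\<lambda>n. (T ^^ n) x0) z" .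
  then show ?thesis using that by (simp add: fixpoint_iff_argmin)
qed

end

theorem mainTheorem16:
  fixes f :: "'a::{real_inner, complete_space} \<Rightarrow> real"
    and gradf :: "'a \<Rightarrow> 'a"
    and g :: "'a \<Rightarrow> ereal"
    and \<mu> \<omega> \<beta> \<gamma> :: real
    and x0 :: 'a
  assumes "\<mu> \<ge> \<omega>" and "\<omega> \<ge> 0" and "\<beta> > 0"
    and "strongly_convex \<mu> f"
    and "\<And>x. (f has_derivative (\<lambda>h. inner (gradf x) h)) (at x)"
    and "\<beta>-lipschitz_on UNIV gradf"
    and "proper_fun g" and "lsc_fun g" and "hypoconvex \<omega> g"
    and "argmin_sum f g \<noteq> {}"
    and "0 < \<gamma>" and "\<gamma> < 2 / (\<beta> + 2 * \<mu>)"
  shows "let \<delta> = (1 - \<gamma> * \<mu>) / (1 - \<gamma> * \<omega>);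
             T = (\<lambda>x. prox \<gamma> g (x - \<gamma> *\<^sub>R gradf x))
         in fixpoints T = argmin_sum f g \<and>
            (\<exists>xbar \<in> argmin_sum f g.
               weakly_converges (\<lambda>n. (T ^^ n) x0) xbar \<and>
               (\<mu> > \<omega> \<longrightarrow>
                  argmin_sum f g = {xbar} \<and>
                  (\<lambda>n. (T ^^ n) x0) \<longlonglongrightarrow> xbar \<and>
                  \<delta> < 1 \<and>
                  (\<forall>n. norm ((T ^^ n) x0 - xbar) \<le> \<delta> ^ n * norm (x0 - xbar))))"
proof -
  interpret forward_backward f gradf g \<mu> \<omega> \<beta> \<gamma>
    by unfold_locales (use assms in auto)
  obtain p where p: "p \<in> argmin_sum f g" using \<open>argmin_sum f g \<noteq> {}\<close> by blast
  have "\<exists>xbar \<in> argmin_sum f g. weakly_converges (\<lambda>n. (T ^^ n) x0) xbar \<and>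
     (\<omega> < \<mu> \<longrightarrow> argmin_sum f g = {xbar} \<and> (\<lambda>n. (T ^^ n) x0) \<longlonglongrightarrow> xbar \<and> \<delta> < 1 \<and>
        (\<forall>n. norm ((T ^^ n) x0 - xbar) \<le> \<delta> ^ n * norm (x0 - xbar)))"
  proof (cases "\<omega> < \<mu>")
    case True
    note linear = iterates_linear_convergence[OF True p]
    show ?thesis
      using p linear tendsto_imp_weakly_converges[OF linear(3)] by (intro bexI[of _ p]) simp_all
  next
    case False
    then have "\<omega> = \<mu>" using \<open>\<mu> \<ge> \<omega>\<close> by simp
    from iterates_weak_convergence[OF this p] obtain z
      where "z \<in> argmin_sum f g" "weakly_converges (\<lambda>n. (T ^^ n) x0) z" .
    with False show ?thesis by (intro bexI[of _ z]) simp_all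
  qed
  then show ?thesis unfolding Let_def T_def[symmetric] \<delta>_def[symmetric] fixpoints_T by simp
qed

end
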